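(* Let $Z$ be a fat point scheme in $\mathbb{P}^1\times\mathbb{P}^1$ and let $\alpha_Z$, $\beta_Z$ be as defined below. Then: (i) for every fixed $j\in\mathbb{N}$ and every $i\ge|\alpha_Z|-1$ (note $|\alpha_Z|=l_1+\dots+l_r$), $$H_Z(i,j)=\sum_{k=1}^{j+1}\#\{\text{entries of }\alpha_Z\text{ that are }\ge k\};$$ (ii) for every fixed $i\in\mathbb{N}$ and every $j\ge|\beta_Z|-1$ (note $|\beta_Z|=l'_1+\dots+l'_t$), $$H_Z(i,j)=\sum_{k=1}^{i+1}\#\{\text{entries of }\beta_Z\text{ that are }\ge k\}.$$ Here entries are counted with multiplicity.
   Context: $\mathbf{k}$ algebraically closed, $R=\mathbf{k}[x_0,x_1,y_0,y_1]$ bigraded with $\deg x_i=(1,0)$, $\deg y_i=(0,1)$; a point $[a_0:a_1]\times[b_0:b_1]$ has ideal $(a_1x_0-a_0x_1,b_1y_0-b_0y_1)$; a fat point scheme $Z=\{(P_1;m_1),\dots,(P_s;m_s)\}$ (distinct points, positive multiplicities) has ideal $I_Z=\bigcap\wp_{P_i}^{m_i}$ and Hilbert function $H_Z(i,j)=\dim_{\mathbf{k}}(R/I_Z)_{(i,j)}$. Let $\pi_1,\pi_2$ be the two projections $\mathbb{P}^1\times\mathbb{P}^1\to\mathbb{P}^1$, $\pi_1(\mathrm{Supp}\,Z)=\{R_1,\dots,R_r\}$ and $\pi_2(\mathrm{Supp}\,Z)=\{Q_1,\dots,Q_t\}$ (distinct), and let $m_{ij}$ be the multiplicity of $R_i\times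 Q_j$ in $Z$ ($m_{ij}=0$ if this point is not in the support). Write $(n)_+=\max\{0,n\}$. For $i=1,\dots,r$ let $l_i=\max_j m_{ij}$ and $a_{i,k}=\sum_{j=1}^t(m_{ij}-k)_+$ for $0\le k\le l_i-1$; $\alpha_Z$ is the tuple consisting of all $a_{i,k}$ ($1\le i\le r$, $0\le k\le l_i-1$), listed in non-increasing order. For $j=1,\dots,t$ let $l'_j=\max_i m_{ij}$ and $b_{j,k}=\sum_{i=1}^r(m_{ij}-k)_+$ for $0\le k\le l'_j-1$; $\beta_Z$ is the tuple of all $b_{j,k}$ in non-increasing order. $|\alpha_Z|$ denotes the length of the tuple. *)

theory Defs
  imports Main "HOL-Library.Poly_Mapping" "HOL-Library.Multiset"
    "HOL-Computational_Algebra.Polynomial"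
begin

text \<open>Variables: 0 = x0, 1 = x1, 2 = y0, 3 = y1.\<close>

type_synonym 'k mpoly = "(nat \<Rightarrow>\<^sub>0 nat) \<Rightarrow>\<^sub>0 'k"

definition Var :: "nat \<Rightarrow> 'k::comm_ring_1 mpoly" where
  "Var v = Poly_Mapping.single (Poly_Mapping.single v 1) 1"

definition Const :: "'k::comm_ring_1 \<Rightarrow> 'k mpoly" where
  "Const c = Poly_Mapping.single 0 c"

definition scal :: "'k::comm_ring_1 \<Rightarrow> 'k mpoly \<Rightarrow> 'k mpoly" where
  "scal c p = Const c * p"

definition inR :: "'k::comm_ring_1 mpoly \<Rightarrow> bool" where
  "inR p \<longleftrightarrow> (\<forall>\<mu>\<in>Poly_Mapping.keys p. Poly_Mapping.keys \<mu> \<subseteq> {0,1,2,3})"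

definition bideg :: "(nat \<Rightarrow>\<^sub>0 nat) \<Rightarrow> nat \<times> nat" where
  "bideg \<mu> = (Poly_Mapping.lookup \<mu> 0 + Poly_Mapping.lookup \<mu> 1, Poly_Mapping.lookup \<mu> 2 + Poly_Mapping.lookup \<mu> 3)"

definition Rdeg :: "nat \<Rightarrow> nat \<Rightarrow> 'k::comm_ring_1 mpoly set" where
  "Rdeg i j = {p. inR p \<and> (\<forall>\<mu>\<in>Poly_Mapping.keys p. bideg \<mu> = (i, j))}"

definition ideal_gen :: "'k::comm_ring_1 mpoly set \<Rightarrow> 'k mpoly set" where
  "ideal_gen S = {\<Sum>l<n. c l * s l | (n::nat) c s. (\<forall>l<n. inR (c l) \<and> s l \<in> S)}"

definition ideal_prod :: "'k::comm_ring_1 mpoly set \<Rightarrow> 'k mpoly set \<Rightarrow> 'k mpoly set" where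
  "ideal_prod I J = ideal_gen {a * b | a b. a \<in> I \<and> b \<in> J}"

fun ideal_pow :: "'k::comm_ring_1 mpoly set \<Rightarrow> nat \<Rightarrow> 'k mpoly set" where
  "ideal_pow I 0 = {p. inR p}"
| "ideal_pow I (Suc m) = ideal_prod (ideal_pow I m) I"

text \<open>A point of P^1 is given by a representative (a0,a1) \<noteq> (0,0);
  pnorm gives the canonical representative of its class.\<close>
definition pnorm :: "'k::field \<times> 'k \<Rightarrow> 'k \<times> 'k" where
  "pnorm p = (if fst p = 0 then (0, 1) else (1, snd p / fst p))"

definition pt_ideal :: "'k::field \<times> 'k \<Rightarrow> 'k \<times> 'k \<Rightarrow> 'k mpoly set" where
  "pt_ideal P Q = ideal_gen
     {Const (snd P) * Var 0 - Const (fst P) * Var 1,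
      Const (snd Q) * Var 2 - Const (fst Q) * Var 3}"

text \<open>A fat point scheme is a list of triples (P, Q, m): the point P x Q with
  multiplicity m.\<close>
type_synonym 'k fatpts = "(('k \<times> 'k) \<times> ('k \<times> 'k) \<times> nat) list"

definition fat_point_scheme :: "'k::field fatpts \<Rightarrow> bool" where
  "fat_point_scheme Z \<longleftrightarrow>
     (\<forall>(P, Q, m)\<in>set Z. P \<noteq> (0, 0) \<and> Q \<noteq> (0, 0) \<and> m > 0) \<and>
     distinct (map (\<lambda>(P, Q, m). (pnorm P, pnorm Q)) Z)"

definition I_Z :: "'k::field fatpts \<Rightarrow> 'k mpoly set" where
  "I_Z Z = {p. inR p} \<inter> (\<Inter>(P, Q, m)\<in>set Z. ideal_pow (pt_ideal P Q) m)"

text \<open>H_Z(i,j) = dim_k (R/I_Z)_(i,j) = dim R_(i,j) - dim (I_Z)_(i,j).\<close>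
definition HF :: "'k::field fatpts \<Rightarrow> nat \<Rightarrow> nat \<Rightarrow> nat" where
  "HF Z i j = vector_space.dim scal (Rdeg i j :: 'k mpoly set)
              - vector_space.dim scal (I_Z Z \<inter> Rdeg i j)"

definition proj1 :: "'k::field fatpts \<Rightarrow> ('k \<times> 'k) set" where
  "proj1 Z = (\<lambda>(P, Q, m). pnorm P) ` set Z"

definition proj2 :: "'k::field fatpts \<Rightarrow> ('k \<times> 'k) set" where
  "proj2 Z = (\<lambda>(P, Q, m). pnorm Q) ` set Z"

text \<open>Multiplicity of R x Q in Z (0 if not in the support); R, Q normalized.\<close>
definition mult :: "'k::field fatpts \<Rightarrow> 'k \<times> 'k \<Rightarrow> 'k \<times> 'k \<Rightarrow> nat" where
  "mult Z R Q = sum_list (map (\<lambda>(P', Q', m). m)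
      (filter (\<lambda>(P', Q', m). pnorm P' = R \<and> pnorm Q' = Q) Z))"

definition alpha :: "'k::field fatpts \<Rightarrow> nat multiset" where
  "alpha Z = (\<Sum>R\<in>proj1 Z.
     mset (map (\<lambda>k. \<Sum>Q\<in>proj2 Z. mult Z R Q - k)
               [0..<Max ((\<lambda>Q. mult Z R Q) ` proj2 Z)]))"

definition beta :: "'k::field fatpts \<Rightarrow> nat multiset" where
  "beta Z = (\<Sum>Q\<in>proj2 Z.
     mset (map (\<lambda>k. \<Sum>R\<in>proj1 Z. mult Z R Q - k)
               [0..<Max ((\<lambda>R. mult Z R Q) ` proj1 Z)]))"

end

(*
  Fix a bidegree (i, j) with i + 1 >= |alpha_Z|. Let R_1, ..., R_r and Q_1, ..., Q_t be the
  projections of the support and add one new point R_(r+1) and Q_(t+1) on each line. On the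
  first line prescribe the orders l_1, ..., l_r at the R's and i + 1 - |alpha_Z| at R_(r+1);
  for each pair (R_u, k) with k < l_u, distribute j + 1 greedily over the orders
  (m_(u,1) - k)_+, ..., (m_(u,t) - k)_+ at the Q's and put the rest at Q_(t+1). This gives
  (i + 1)(j + 1) pairs ((R, k), (Q, b)). For each of them, the product of a form in x that
  vanishes to order k at R and to the prescribed orders at the other R's with a form in y
  doing the same for b at Q is a form of bidegree (i, j), and the Hasse derivatives of order
  (k, b) at (R, Q) against these forms give a triangular matrix with nonzero diagonal (in the
  lexicographic order of the pairs). So the forms are a basis of R_(i,j). Those with Q = Q_(t+1)
  lie in I_Z, while every other Hasse derivative has order below the multiplicity of a point of
  Z and vanishes on I_Z. Hence H_Z(i, j) counts the pairs with Q <> Q_(t+1):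
  sum over (u, k) of min (a_(u,k), j + 1), which is sum_(k=1)^(j+1) #{a in alpha_Z | a >= k}.
  Part (ii) is part (i) with the two factors exchanged.
*)

theory Submission
  imports Defs "HOL-Library.Product_Lexorder"
begin

section \<open>Hasse derivatives as coefficient pairings\<close>

definition coeff_pairing :: "((nat \<Rightarrow>\<^sub>0 nat) \<Rightarrow> 'k::comm_ring_1) \<Rightarrow> 'k mpoly \<Rightarrow> 'k" where
  "coeff_pairing w f = (\<Sum>\<mu>\<in>Poly_Mapping.keys f. Poly_Mapping.lookup f \<mu> * w \<mu>)"

lemma coeff_pairing_superset:
  assumes "finite S" "Poly_Mapping.keys f \<subseteq> S"
  shows "coeff_pairing w f = (\<Sum>\<mu>\<in>S. Poly_Mapping.lookup f \<mu> * w \<mu>)"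
  unfolding coeff_pairing_def
  by (rule sum.mono_neutral_left) (use assms in \<open>auto simp: in_keys_iff\<close>)

lemma coeff_pairing_add: "coeff_pairing w (f + g) = coeff_pairing w f + coeff_pairing w g"
  unfolding coeff_pairing_def by (rule setsum_keys_plus_distrib) (simp_all add: distrib_right)

lemma coeff_pairing_zero [simp]: "coeff_pairing w 0 = 0"
  by (simp add: coeff_pairing_def)

lemma coeff_pairing_single [simp]: "coeff_pairing w (Poly_Mapping.single \<mu> c) = c * w \<mu>"
  by (subst coeff_pairing_superset[of "{\<mu>}"]) auto

lemma coeff_pairing_one: "coeff_pairing w 1 = w 0"
  using coeff_pairing_single[of w 0 1] by simp

lemma coeff_pairing_Var: "coeff_pairing w (Var v) = w (Poly_Mapping.single v 1)"
  by (simp add: Var_def)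

lemma coeff_pairing_sum: "coeff_pairing w (sum F I) = (\<Sum>i\<in>I. coeff_pairing w (F i))"
  by (induction I rule: infinite_finite_induct) (auto simp: coeff_pairing_add)

lemma coeff_pairing_diff: "coeff_pairing w (f - g) = coeff_pairing w f - coeff_pairing w g"
  using coeff_pairing_add[of w "f - g" g] by simp

lemma Const_add: "Const (a + b) = Const a + Const b"
  by (simp add: Const_def single_add)

lemma Const_mult: "Const (a * b) = Const a * Const b"
  by (simp add: Const_def mult_single)

lemma lookup_Const_mult: "Poly_Mapping.lookup (Const c * f) \<mu> = c * Poly_Mapping.lookup f \<mu>"
  by (simp add: Const_def flip: mult_map_scale_conv_mult) (simp add: map.rep_eq when_def)

lemma coeff_pairing_Const_mult: "coeff_pairing w (Const c * f) = c * coeff_pairing w f"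
proof -
  have "coeff_pairing w (Const c * f) =
      (\<Sum>\<mu>\<in>Poly_Mapping.keys f. Poly_Mapping.lookup (Const c * f) \<mu> * w \<mu>)"
    by (rule coeff_pairing_superset) (auto simp: in_keys_iff lookup_Const_mult)
  then show ?thesis
    by (simp add: lookup_Const_mult coeff_pairing_def sum_distrib_left mult.assoc)
qed

lemma poly_mapping_sum_single:
  "f = (\<Sum>\<mu>\<in>Poly_Mapping.keys f. Poly_Mapping.single \<mu> (Poly_Mapping.lookup f \<mu>))"
proof (rule poly_mapping_eqI)
  fix \<nu>
  have "(\<Sum>\<mu>\<in>Poly_Mapping.keys f. Poly_Mapping.lookup (Poly_Mapping.single \<mu> (Poly_Mapping.lookup f \<mu>)) \<nu>)
      = (\<Sum>\<mu>\<in>Poly_Mapping.keys f. if \<mu> = \<nu> then Poly_Mapping.lookup f \<mu> else 0)"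
    by (intro sum.cong) (auto simp: lookup_single)
  also have "\<dots> = Poly_Mapping.lookup f \<nu>"
    by (auto simp: sum.delta in_keys_iff)
  finally show "Poly_Mapping.lookup f \<nu> =
      Poly_Mapping.lookup (\<Sum>\<mu>\<in>Poly_Mapping.keys f. Poly_Mapping.single \<mu> (Poly_Mapping.lookup f \<mu>)) \<nu>"
    by (simp add: lookup_sum)
qed

lemma coeff_pairing_mult:
  "coeff_pairing w (f * g) = (\<Sum>\<mu>\<in>Poly_Mapping.keys f. \<Sum>\<nu>\<in>Poly_Mapping.keys g.
      Poly_Mapping.lookup f \<mu> * Poly_Mapping.lookup g \<nu> * w (\<mu> + \<nu>))"
proof -
  have "f * g = (\<Sum>\<mu>\<in>Poly_Mapping.keys f. \<Sum>\<nu>\<in>Poly_Mapping.keys g.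
      Poly_Mapping.single (\<mu> + \<nu>) (Poly_Mapping.lookup f \<mu> * Poly_Mapping.lookup g \<nu>))"
    by (subst poly_mapping_sum_single, subst (2) poly_mapping_sum_single)
      (simp add: sum_product mult_single)
  then show ?thesis by (simp add: coeff_pairing_sum)
qed

text \<open>The abstract form of the Leibniz rule for Hasse derivatives.\<close>

lemma coeff_pairing_mult_convolution:
  assumes "\<And>\<mu> \<nu>. w (\<mu> + \<nu>) = (\<Sum>j\<in>A. u j \<mu> * v j \<nu>)"
  shows "coeff_pairing w (f * g) = (\<Sum>j\<in>A. coeff_pairing (u j) f * coeff_pairing (v j) g)"
proof -
  have "coeff_pairing w (f * g) = (\<Sum>\<mu>\<in>Poly_Mapping.keys f. \<Sum>\<nu>\<in>Poly_Mapping.keys g. \<Sum>j\<in>A.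
      (Poly_Mapping.lookup f \<mu> * u j \<mu>) * (Poly_Mapping.lookup g \<nu> * v j \<nu>))"
    by (simp add: coeff_pairing_mult assms sum_distrib_left mult_ac)
  also have "\<dots> = (\<Sum>j\<in>A. \<Sum>\<mu>\<in>Poly_Mapping.keys f. \<Sum>\<nu>\<in>Poly_Mapping.keys g.
      (Poly_Mapping.lookup f \<mu> * u j \<mu>) * (Poly_Mapping.lookup g \<nu> * v j \<nu>))"
    by (subst sum.swap, subst (2) sum.swap) simp
  finally show ?thesis by (simp add: coeff_pairing_def sum_product)
qed

text \<open>Pairing with \<open>hasse_weight v t k\<close> sets every variable other than \<open>v\<close> to \<open>1\<close>
  and takes the \<open>k\<close>-th Hasse derivative in the variable \<open>v\<close> at \<open>t\<close>.\<close>

definition hasse_weight :: "nat \<Rightarrow> 'k::comm_ring_1 \<Rightarrow> nat \<Rightarrow> (nat \<Rightarrow>\<^sub>0 nat) \<Rightarrow> 'k" where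
  "hasse_weight v t k \<mu> = of_nat (Poly_Mapping.lookup \<mu> v choose k) * t ^ (Poly_Mapping.lookup \<mu> v - k)"

lemma binomial_power_vandermonde:
  "of_nat ((p + q) choose k) * (t::'k::comm_ring_1) ^ (p + q - k) =
   (\<Sum>j\<le>k. (of_nat (p choose j) * t ^ (p - j)) * (of_nat (q choose (k - j)) * t ^ (q - (k - j))))"
proof -
  have "(of_nat (p choose j) * t ^ (p - j)) * (of_nat (q choose (k - j)) * t ^ (q - (k - j)))
      = of_nat ((p choose j) * (q choose (k - j))) * t ^ (p + q - k)" if "j \<le> k" for j
  proof (cases "j \<le> p \<and> k - j \<le> q")
    case True
    then have "p - j + (q - (k - j)) = p + q - k" using that by linarith
    then show ?thesis by (simp add: power_add[symmetric] mult_ac)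
  qed (auto simp: binomial_eq_0 not_le)
  then have "(\<Sum>j\<le>k. (of_nat (p choose j) * t ^ (p - j)) * (of_nat (q choose (k - j)) * t ^ (q - (k - j))))
      = of_nat (\<Sum>j\<le>k. (p choose j) * (q choose (k - j))) * t ^ (p + q - k)"
    by (simp add: sum_distrib_right)
  then show ?thesis by (simp add: vandermonde)
qed

lemma hasse_weight_add:
  "hasse_weight v t k (\<mu> + \<nu>) = (\<Sum>j\<le>k. hasse_weight v t j \<mu> * hasse_weight v t (k - j) \<nu>)"
  unfolding hasse_weight_def by (simp add: lookup_add binomial_power_vandermonde)

lemma coeff_pairing_hasse_weight_mult:
  "coeff_pairing (hasse_weight v t k) (f * g) =
    (\<Sum>j\<le>k. coeff_pairing (hasse_weight v t j) f * coeff_pairing (hasse_weight v t (k - j)) g)"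
  by (rule coeff_pairing_mult_convolution) (rule hasse_weight_add)

lemma coeff_pairing_hasse_weight2_mult:
  "coeff_pairing (\<lambda>\<mu>. hasse_weight va ta k \<mu> * hasse_weight vb tb b \<mu>) (f * g) =
    (\<Sum>k1\<le>k. \<Sum>b1\<le>b.
      coeff_pairing (\<lambda>\<mu>. hasse_weight va ta k1 \<mu> * hasse_weight vb tb b1 \<mu>) f *
      coeff_pairing (\<lambda>\<mu>. hasse_weight va ta (k - k1) \<mu> * hasse_weight vb tb (b - b1) \<mu>) g)"
proof -
  let ?W = "\<lambda>k b \<mu>. hasse_weight va ta k \<mu> * hasse_weight vb tb b \<mu>"
  have "coeff_pairing (?W k b) (f * g) = (\<Sum>j\<in>{..k} \<times> {..b}.
      coeff_pairing (?W (fst j) (snd j)) f * coeff_pairing (?W (k - fst j) (b - snd j)) g)"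
    by (rule coeff_pairing_mult_convolution)
      (simp add: hasse_weight_add sum_product sum.cartesian_product case_prod_beta mult_ac)
  then show ?thesis by (simp add: sum.cartesian_product case_prod_beta)
qed

lemma inR_diff: "inR f \<Longrightarrow> inR g \<Longrightarrow> inR (f - g)"
  unfolding inR_def using keys_diff[of f g] by blast

lemma inR_mult: "inR f \<Longrightarrow> inR g \<Longrightarrow> inR (f * g)"
  unfolding inR_def
proof
  fix \<mu> assume f: "\<forall>\<mu>\<in>Poly_Mapping.keys f. Poly_Mapping.keys \<mu> \<subseteq> {0, 1, 2, 3}"
    and g: "\<forall>\<mu>\<in>Poly_Mapping.keys g. Poly_Mapping.keys \<mu> \<subseteq> {0, 1, 2, 3}"
    and "\<mu> \<in> Poly_Mapping.keys (f * g)"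
  then obtain a b where "\<mu> = a + b" "a \<in> Poly_Mapping.keys f" "b \<in> Poly_Mapping.keys g"
    using keys_mult[of f g] by auto
  then show "Poly_Mapping.keys \<mu> \<subseteq> {0, 1, 2, 3}"
    using f g Poly_Mapping.keys_add[of a b] by blast
qed

lemma inR_Const [simp]: "inR (Const c)"
  by (simp add: Const_def inR_def)

lemma inR_one [simp]: "inR 1"
  using inR_Const[of 1] by (simp add: Const_def)

lemma inR_Var: "v \<in> {0,1,2,3} \<Longrightarrow> inR (Var v)"
  by (simp add: Var_def inR_def)

lemma inR_power: "inR f \<Longrightarrow> inR (f ^ n)"
  by (induction n) (auto intro: inR_mult)

lemma ideal_gen_memI: "s \<in> S \<Longrightarrow> inR c \<Longrightarrow> c * s \<in> ideal_gen S"
  unfolding ideal_gen_def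
  by (rule CollectI, rule exI[of _ 1], rule exI[of _ "\<lambda>_. c"], rule exI[of _ "\<lambda>_. s"]) simp

lemma ideal_genE:
  assumes "x \<in> ideal_gen S"
  obtains n :: nat and c s where "x = (\<Sum>l<n. c l * s l)" "\<And>l. l < n \<Longrightarrow> inR (c l)" "\<And>l. l < n \<Longrightarrow> s l \<in> S"
  using assms unfolding ideal_gen_def by force

lemma ideal_pow_Suc_memI: "x \<in> ideal_pow I m \<Longrightarrow> y \<in> I \<Longrightarrow> x * y \<in> ideal_pow I (Suc m)"
  using ideal_gen_memI[of "x * y" "{a * b |a b. a \<in> ideal_pow I m \<and> b \<in> I}" 1]
  by (auto simp: ideal_prod_def)

lemma power_mult_mem_ideal_pow:
  "x \<in> ideal_pow I n \<Longrightarrow> y \<in> I \<Longrightarrow> y ^ a * x \<in> ideal_pow I (n + a)"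
proof (induction a)
  case (Suc a)
  then show ?case
    using ideal_pow_Suc_memI[of "y ^ a * x" I "n + a" y] by (simp add: mult_ac)
qed simp

section \<open>Binary forms and Hasse derivatives on \<open>\<P>\<^sup>1\<close>\<close>

definition binary_form :: "nat \<Rightarrow> nat \<Rightarrow> nat \<Rightarrow> 'k::comm_ring_1 mpoly \<Rightarrow> bool" where
  "binary_form v0 v1 d f \<longleftrightarrow> (\<forall>\<mu>\<in>Poly_Mapping.keys f. Poly_Mapping.keys \<mu> \<subseteq> {v0, v1} \<and>
      Poly_Mapping.lookup \<mu> v0 + Poly_Mapping.lookup \<mu> v1 = d)"

lemma binary_form_mult:
  assumes f: "binary_form v0 v1 d1 f" and g: "binary_form v0 v1 d2 g"
  shows "binary_form v0 v1 (d1 + d2) (f * g)"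
  unfolding binary_form_def
proof
  fix \<mu> assume "\<mu> \<in> Poly_Mapping.keys (f * g)"
  then obtain a b where ab: "\<mu> = a + b" "a \<in> Poly_Mapping.keys f" "b \<in> Poly_Mapping.keys g"
    using keys_mult[of f g] by auto
  moreover have "Poly_Mapping.keys a \<subseteq> {v0, v1}" "Poly_Mapping.keys b \<subseteq> {v0, v1}"
    "Poly_Mapping.lookup a v0 + Poly_Mapping.lookup a v1 = d1"
    "Poly_Mapping.lookup b v0 + Poly_Mapping.lookup b v1 = d2"
    using f g ab unfolding binary_form_def by auto
  ultimately show "Poly_Mapping.keys \<mu> \<subseteq> {v0, v1} \<and>
      Poly_Mapping.lookup \<mu> v0 + Poly_Mapping.lookup \<mu> v1 = d1 + d2"
    using Poly_Mapping.keys_add[of a b] by (auto simp: lookup_add)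
qed

lemma binary_form_one: "binary_form v0 v1 0 1"
  by (simp add: binary_form_def)

lemma binary_form_power: "binary_form v0 v1 d f \<Longrightarrow> binary_form v0 v1 (n * d) (f ^ n)"
  by (induction n) (simp_all add: binary_form_one binary_form_mult)

lemma binary_form_prod:
  "finite I \<Longrightarrow> (\<And>i. i \<in> I \<Longrightarrow> binary_form v0 v1 (d i) (F i)) \<Longrightarrow>
    binary_form v0 v1 (sum d I) (prod F I)"
  by (induction I rule: finite_induct) (simp_all add: binary_form_one binary_form_mult)

lemma binary_form_diff:
  "binary_form v0 v1 d f \<Longrightarrow> binary_form v0 v1 d g \<Longrightarrow> binary_form v0 v1 d (f - g)"
  unfolding binary_form_def using keys_diff[of f g] by blast

lemma binary_form_Const_mult_Var:
  "v \<in> {v0, v1} \<Longrightarrow> v0 \<noteq> v1 \<Longrightarrow> binary_form v0 v1 1 (Const c * Var v)"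
  by (auto simp: binary_form_def Const_def Var_def mult_single lookup_single)

lemma binary_form_Var: "v \<in> {v0, v1} \<Longrightarrow> v0 \<noteq> v1 \<Longrightarrow> binary_form v0 v1 1 (Var v)"
  using binary_form_Const_mult_Var[of v v0 v1 1] by (simp add: Const_def)

lemma binary_form_inR: "v0 \<in> {0,1,2,3} \<Longrightarrow> v1 \<in> {0,1,2,3} \<Longrightarrow> binary_form v0 v1 d f \<Longrightarrow> inR f"
  unfolding binary_form_def inR_def by blast

lemma keys_binary_form_lookup_other:
  assumes "binary_form v0 v1 d e" "\<mu> \<in> Poly_Mapping.keys e" "v \<notin> {v0, v1}"
  shows "Poly_Mapping.lookup \<mu> v = 0"
proof -
  have "v \<notin> Poly_Mapping.keys \<mu>" using assms unfolding binary_form_def by blast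
  then show ?thesis by (simp add: in_keys_iff)
qed

definition point_form :: "nat \<Rightarrow> nat \<Rightarrow> 'k::comm_ring_1 \<times> 'k \<Rightarrow> 'k mpoly" where
  "point_form v0 v1 P = Const (snd P) * Var v0 - Const (fst P) * Var v1"

lemma binary_form_point_form: "v0 \<noteq> v1 \<Longrightarrow> binary_form v0 v1 1 (point_form v0 v1 P)"
  unfolding point_form_def by (intro binary_form_diff binary_form_Const_mult_Var) auto

lemma point_form_eq_Const_mult_pnorm:
  assumes "P \<noteq> (0, 0)"
  obtains c where "c \<noteq> 0" "point_form v0 v1 P = Const c * point_form v0 v1 (pnorm P)"
proof
  let ?c = "if fst P = 0 then snd P else fst P"
  show "?c \<noteq> 0" using assms by (cases P) auto
  show "point_form v0 v1 P = Const ?c * point_form v0 v1 (pnorm P)"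
    using \<open>?c \<noteq> 0\<close> by (auto simp: pnorm_def point_form_def Const_def mult_single algebra_simps
      simp flip: mult.assoc)
qed

definition normal_point :: "'k::field \<times> 'k \<Rightarrow> bool" where
  "normal_point p \<longleftrightarrow> p = (0, 1) \<or> fst p = 1"

lemma normal_point_pnorm: "normal_point (pnorm P)"
  by (simp add: normal_point_def pnorm_def)

lemma point_form_pnorm_eq_Const_mult:
  assumes "P \<noteq> (0, 0)"
  obtains c where "point_form v0 v1 (pnorm P) = Const c * point_form v0 v1 P"
proof -
  obtain c where "c \<noteq> 0" and c: "point_form v0 v1 P = Const c * point_form v0 v1 (pnorm P)"
    using point_form_eq_Const_mult_pnorm[OF assms] .
  have "Const (1 / c) * point_form v0 v1 P = Const (1 / c * c) * point_form v0 v1 (pnorm P)"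
    by (simp only: c mult.assoc[symmetric] Const_mult)
  then show thesis
    using \<open>c \<noteq> 0\<close> by (intro that[of "1 / c"]) (simp add: Const_def)
qed

text \<open>The affine chart around a normalized point \<open>p\<close> of the line with coordinates
  \<open>v0, v1\<close>: the coordinate \<open>chart_var v1 v0 p\<close> is set to \<open>1\<close>, and \<open>p\<close> is where the
  other coordinate \<open>chart_var v0 v1 p\<close> takes the value \<open>chart_coord p\<close>.\<close>

definition chart_var :: "nat \<Rightarrow> nat \<Rightarrow> 'k::field \<times> 'k \<Rightarrow> nat" where
  "chart_var v0 v1 p = (if fst p = 0 then v0 else v1)"

definition chart_coord :: "'k::field \<times> 'k \<Rightarrow> 'k" where
  "chart_coord p = (if fst p = 0 then 0 else snd p)"

definition hasse_at :: "nat \<Rightarrow> nat \<Rightarrow> 'k::field \<times> 'k \<Rightarrow> nat \<Rightarrow> 'k mpoly \<Rightarrow> 'k" where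
  "hasse_at v0 v1 p k = coeff_pairing (hasse_weight (chart_var v0 v1 p) (chart_coord p) k)"

lemma hasse_at_mult:
  "hasse_at v0 v1 p k (f * g) = (\<Sum>j\<le>k. hasse_at v0 v1 p j f * hasse_at v0 v1 p (k - j) g)"
  unfolding hasse_at_def by (rule coeff_pairing_hasse_weight_mult)

lemma hasse_at_0_mult: "hasse_at v0 v1 p 0 (f * g) = hasse_at v0 v1 p 0 f * hasse_at v0 v1 p 0 g"
  using hasse_at_mult[of v0 v1 p 0 f g] by simp

lemma hasse_at_0_one: "hasse_at v0 v1 p 0 1 = 1"
  by (simp add: hasse_at_def coeff_pairing_one hasse_weight_def)

lemma hasse_at_0_power: "hasse_at v0 v1 p 0 (f ^ n) = hasse_at v0 v1 p 0 f ^ n"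
  by (induction n) (simp_all add: hasse_at_0_one hasse_at_0_mult)

lemma hasse_at_0_prod: "hasse_at v0 v1 p 0 (prod F I) = (\<Prod>i\<in>I. hasse_at v0 v1 p 0 (F i))"
  by (induction I rule: infinite_finite_induct) (simp_all add: hasse_at_0_one hasse_at_0_mult)

lemma hasse_at_Var:
  "hasse_at v0 v1 p k (Var w) = (if w = chart_var v0 v1 p then of_nat (1 choose k) * chart_coord p ^ (1 - k)
    else of_nat (0 choose k))"
  by (simp add: hasse_at_def coeff_pairing_Var hasse_weight_def lookup_single)

lemma hasse_at_Const_mult: "hasse_at v0 v1 p k (Const c * f) = c * hasse_at v0 v1 p k f"
  unfolding hasse_at_def by (rule coeff_pairing_Const_mult)

lemma hasse_at_diff: "hasse_at v0 v1 p k (f - g) = hasse_at v0 v1 p k f - hasse_at v0 v1 p k g"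
  unfolding hasse_at_def by (rule coeff_pairing_diff)

text \<open>For distinct points \<open>ps\<close> with prescribed orders \<open>e\<close>, the form \<open>dual_form \<dots> s b\<close>
  vanishes to order \<open>e s'\<close> at every other point \<open>ps ! s'\<close> and to order exactly \<open>b\<close> at
  \<open>ps ! s\<close>; the power of the chart variable pads it to degree \<open>d\<close>.\<close>

definition dual_form ::
    "nat \<Rightarrow> nat \<Rightarrow> ('k::field \<times> 'k) list \<Rightarrow> (nat \<Rightarrow> nat) \<Rightarrow> nat \<Rightarrow> nat \<Rightarrow> nat \<Rightarrow> 'k mpoly" where
  "dual_form v0 v1 ps e d s b = point_form v0 v1 (ps ! s) ^ b *
     ((\<Prod>s'\<in>{..<length ps} - {s}. point_form v0 v1 (ps ! s') ^ e s') *
      Var (chart_var v1 v0 (ps ! s)) ^ (d - b - (\<Sum>s'\<in>{..<length ps} - {s}. e s')))"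

context
  fixes v0 v1 :: nat
  assumes vars_distinct: "v0 \<noteq> v1"
begin

lemma hasse_at_point_form_0: "normal_point p \<Longrightarrow> hasse_at v0 v1 p 0 (point_form v0 v1 p) = 0"
  using vars_distinct
  by (auto simp: normal_point_def point_form_def hasse_at_diff hasse_at_Const_mult hasse_at_Var
      chart_var_def chart_coord_def)

lemma hasse_at_point_form_pnorm:
  assumes "P \<noteq> (0, 0)"
  shows "hasse_at v0 v1 (pnorm P) 0 (point_form v0 v1 P) = 0"
proof -
  obtain c where "point_form v0 v1 P = Const c * point_form v0 v1 (pnorm P)"
    using point_form_eq_Const_mult_pnorm[OF assms] .
  then show ?thesis
    by (simp add: hasse_at_Const_mult hasse_at_point_form_0[OF normal_point_pnorm])
qed

lemma hasse_at_point_form_1: "normal_point p \<Longrightarrow> hasse_at v0 v1 p 1 (point_form v0 v1 p) \<noteq> 0"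
  using vars_distinct
  by (auto simp: normal_point_def point_form_def hasse_at_diff hasse_at_Const_mult hasse_at_Var
      chart_var_def chart_coord_def)

lemma hasse_at_point_form_other:
  "normal_point p \<Longrightarrow> normal_point q \<Longrightarrow> p \<noteq> q \<Longrightarrow> hasse_at v0 v1 p 0 (point_form v0 v1 q) \<noteq> 0"
  using vars_distinct
  by (cases p; cases q) (auto simp: normal_point_def point_form_def hasse_at_diff
      hasse_at_Const_mult hasse_at_Var chart_var_def chart_coord_def)

lemma hasse_at_chart_unit: "hasse_at v0 v1 p 0 (Var (chart_var v1 v0 p)) = 1"
  using vars_distinct by (auto simp: hasse_at_Var chart_var_def)

lemma hasse_at_point_form_power_low:
  assumes "normal_point p"
  shows "k < e \<Longrightarrow> hasse_at v0 v1 p k (point_form v0 v1 p ^ e * g) = 0"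
proof (induction e arbitrary: k)
  case (Suc e)
  have "hasse_at v0 v1 p k (point_form v0 v1 p ^ Suc e * g) =
      (\<Sum>j\<le>k. hasse_at v0 v1 p j (point_form v0 v1 p) * hasse_at v0 v1 p (k - j) (point_form v0 v1 p ^ e * g))"
    by (simp only: power_Suc mult.assoc hasse_at_mult)
  also have "\<dots> = 0"
  proof (intro sum.neutral ballI)
    fix j assume "j \<in> {..k}"
    then show "hasse_at v0 v1 p j (point_form v0 v1 p) * hasse_at v0 v1 p (k - j) (point_form v0 v1 p ^ e * g) = 0"
      using Suc hasse_at_point_form_0[OF assms] by (cases "j = 0") auto
  qed
  finally show ?case .
qed simp

lemma hasse_at_point_form_power:
  assumes "normal_point p"
  shows "hasse_at v0 v1 p e (point_form v0 v1 p ^ e * g) =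
    hasse_at v0 v1 p 1 (point_form v0 v1 p) ^ e * hasse_at v0 v1 p 0 g"
proof (induction e)
  case (Suc e)
  let ?l = "point_form v0 v1 p"
  have "hasse_at v0 v1 p (Suc e) (?l ^ Suc e * g) =
      (\<Sum>j\<le>Suc e. hasse_at v0 v1 p j ?l * hasse_at v0 v1 p (Suc e - j) (?l ^ e * g))"
    by (simp only: power_Suc mult.assoc hasse_at_mult)
  also have "\<dots> = (\<Sum>j\<in>{1}. hasse_at v0 v1 p j ?l * hasse_at v0 v1 p (Suc e - j) (?l ^ e * g))"
  proof (rule sum.mono_neutral_right)
    show "\<forall>j\<in>{..Suc e} - {1}. hasse_at v0 v1 p j ?l * hasse_at v0 v1 p (Suc e - j) (?l ^ e * g) = 0"
    proof
      fix j assume j: "j \<in> {..Suc e} - {1}"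
      show "hasse_at v0 v1 p j ?l * hasse_at v0 v1 p (Suc e - j) (?l ^ e * g) = 0"
      proof (cases "j = 0")
        case True
        then show ?thesis using hasse_at_point_form_0[OF assms] by simp
      next
        case False
        then have "Suc e - j < e" using j by auto
        then show ?thesis using hasse_at_point_form_power_low[OF assms] by simp
      qed
    qed
  qed auto
  finally show ?case using Suc.IH by simp
qed simp

lemma binary_form_point_form_prod:
  "finite I \<Longrightarrow> binary_form v0 v1 (\<Sum>i\<in>I. e i) (\<Prod>i\<in>I. point_form v0 v1 (ps ! i) ^ e i)"
proof (rule binary_form_prod)
  fix i
  have "binary_form v0 v1 1 (point_form v0 v1 (ps ! i))"
    by (rule binary_form_point_form[OF vars_distinct])
  from binary_form_power[OF this, of "e i"]
  show "binary_form v0 v1 (e i) (point_form v0 v1 (ps ! i) ^ e i)" by simp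
qed

lemma binary_form_chart_unit: "binary_form v0 v1 1 (Var (chart_var v1 v0 p))"
  using vars_distinct by (intro binary_form_Var) (auto simp: chart_var_def)

lemma binary_form_dual_form:
  assumes "s < length ps" "b < e s" "(\<Sum>s'<length ps. e s') \<le> d + 1"
  shows "binary_form v0 v1 d (dual_form v0 v1 ps e d s b)"
proof -
  let ?S = "\<Sum>s'\<in>{..<length ps} - {s}. e s'"
  have "(\<Sum>s'<length ps. e s') = e s + ?S"
    using assms(1) by (simp add: sum.remove)
  then have "b * 1 + (?S + (d - b - ?S) * 1) = d"
    using assms(2,3) by linarith
  moreover have "binary_form v0 v1 (b * 1 + (?S + (d - b - ?S) * 1)) (dual_form v0 v1 ps e d s b)"
    unfolding dual_form_def
    by (intro binary_form_mult binary_form_power binary_form_point_form binary_form_point_form_prod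
        binary_form_chart_unit vars_distinct) simp
  ultimately show ?thesis by simp
qed

lemma dual_form_factor:
  assumes "s' < length ps"
  obtains g d' where
    "dual_form v0 v1 ps e d s b = point_form v0 v1 (ps ! s') ^ (if s' = s then b else e s') * g"
    "binary_form v0 v1 d' g"
proof (cases "s' = s")
  case True
  let ?S = "{..<length ps} - {s}"
  let ?g = "(\<Prod>i\<in>?S. point_form v0 v1 (ps ! i) ^ e i) *
    Var (chart_var v1 v0 (ps ! s)) ^ (d - b - (\<Sum>i\<in>?S. e i))"
  have "dual_form v0 v1 ps e d s b = point_form v0 v1 (ps ! s') ^ (if s' = s then b else e s') * ?g"
    using True by (simp add: dual_form_def)
  moreover have "binary_form v0 v1 ((\<Sum>i\<in>?S. e i) + (d - b - (\<Sum>i\<in>?S. e i)) * 1) ?g"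
    by (intro binary_form_mult binary_form_point_form_prod binary_form_power binary_form_chart_unit) simp
  ultimately show thesis by (rule that)
next
  case False
  let ?S = "{..<length ps} - {s}"
  let ?g = "point_form v0 v1 (ps ! s) ^ b * (\<Prod>i\<in>?S - {s'}. point_form v0 v1 (ps ! i) ^ e i) *
    Var (chart_var v1 v0 (ps ! s)) ^ (d - b - (\<Sum>i\<in>?S. e i))"
  have "(\<Prod>i\<in>?S. point_form v0 v1 (ps ! i) ^ e i)
      = point_form v0 v1 (ps ! s') ^ e s' * (\<Prod>i\<in>?S - {s'}. point_form v0 v1 (ps ! i) ^ e i)"
    using False assms by (intro prod.remove) auto
  then have "dual_form v0 v1 ps e d s b = point_form v0 v1 (ps ! s') ^ (if s' = s then b else e s') * ?g"
    using False unfolding dual_form_def by (simp only: mult_ac if_False)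
  moreover have "binary_form v0 v1 (b * 1 + (\<Sum>i\<in>?S - {s'}. e i) + (d - b - (\<Sum>i\<in>?S. e i)) * 1) ?g"
    by (intro binary_form_mult binary_form_point_form_prod binary_form_power binary_form_chart_unit
        binary_form_point_form vars_distinct) simp
  ultimately show thesis by (rule that)
qed

lemma hasse_at_dual_form_eq_0:
  assumes "s' < length ps" "b' < e s'" "s \<noteq> s' \<or> b' < b" "normal_point (ps ! s')"
  shows "hasse_at v0 v1 (ps ! s') b' (dual_form v0 v1 ps e d s b) = 0"
proof -
  obtain g d' where "dual_form v0 v1 ps e d s b = point_form v0 v1 (ps ! s') ^ (if s' = s then b else e s') * g"
    using dual_form_factor[OF assms(1)] by blast
  then show ?thesis
    using hasse_at_point_form_power_low[OF assms(4)] assms(2,3) by auto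
qed

lemma hasse_at_dual_form_neq_0:
  assumes "s < length ps" "distinct ps" "\<And>p. p \<in> set ps \<Longrightarrow> normal_point p"
  shows "hasse_at v0 v1 (ps ! s) b (dual_form v0 v1 ps e d s b) \<noteq> 0"
proof -
  let ?p = "ps ! s"
  have p: "normal_point ?p" using assms(1,3) by simp
  have other: "hasse_at v0 v1 ?p 0 (point_form v0 v1 (ps ! i)) \<noteq> 0" if "i \<in> {..<length ps} - {s}" for i
    using that assms by (intro hasse_at_point_form_other[OF p]) (auto simp: nth_eq_iff_index_eq)
  have "hasse_at v0 v1 ?p b (dual_form v0 v1 ps e d s b) =
    hasse_at v0 v1 ?p 1 (point_form v0 v1 ?p) ^ b *
    (\<Prod>i\<in>{..<length ps} - {s}. hasse_at v0 v1 ?p 0 (point_form v0 v1 (ps ! i)) ^ e i)"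
    unfolding dual_form_def hasse_at_point_form_power[OF p]
    by (simp add: hasse_at_0_mult hasse_at_0_prod hasse_at_0_power hasse_at_chart_unit)
  then show ?thesis
    using other hasse_at_point_form_1[OF p] by auto
qed

end

section \<open>Dimensions via triangular pairings\<close>

definition triangular :: "'i::linorder set \<Rightarrow> ('i \<Rightarrow> 'b) \<Rightarrow> ('i \<Rightarrow> 'b \<Rightarrow> 'a::zero) \<Rightarrow> bool" where
  "triangular J E \<Lambda> \<longleftrightarrow> (\<forall>p\<in>J. \<Lambda> p (E p) \<noteq> 0) \<and> (\<forall>p\<in>J. \<forall>q\<in>J. p < q \<longrightarrow> \<Lambda> p (E q) = 0)"

lemma triangular_subset: "triangular J E \<Lambda> \<Longrightarrow> J' \<subseteq> J \<Longrightarrow> triangular J' E \<Lambda>"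
  unfolding triangular_def by blast

context vector_space
begin

lemma card_independent_le_dim:
  assumes "finite B" "V \<subseteq> span B" "independent S" "S \<subseteq> V"
  shows "card S \<le> dim V"
proof -
  obtain BV where BV: "BV \<subseteq> V" "independent BV" "V \<subseteq> span BV" "card BV = dim V"
    by (rule basis_exists)
  have "finite BV"
    using independent_span_bound[OF assms(1) BV(2)] BV(1) assms(2) by blast
  moreover have "S \<subseteq> span BV" using BV(3) assms(4) by blast
  ultimately show ?thesis
    using independent_span_bound[of BV S] assms(3) BV(4) by simp
qed

context
  fixes \<Lambda> :: "'i::linorder \<Rightarrow> 'b \<Rightarrow> 'a" and E :: "'i \<Rightarrow> 'b"
  assumes \<Lambda>_add: "\<And>p x y. \<Lambda> p (x + y) = \<Lambda> p x + \<Lambda> p y"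
    and \<Lambda>_scale: "\<And>p c x. \<Lambda> p (c *s x) = c * \<Lambda> p x"
begin

lemma pairing_vanishes_on_span:
  assumes "\<And>x. x \<in> S \<Longrightarrow> \<Lambda> p x = 0" "x \<in> span S"
  shows "\<Lambda> p x = 0"
proof -
  have "subspace {x. \<Lambda> p x = 0}"
    using \<Lambda>_scale[of p 0 0] by (auto simp: subspace_def \<Lambda>_add \<Lambda>_scale)
  then show ?thesis
    by (rule span_induct[where P = "\<lambda>x. \<Lambda> p x = 0", OF assms(2)]) (use assms(1) in simp)
qed

text \<open>Adjoining the vectors \<open>E q\<close> one by one, from the smallest index up, keeps
  independence: \<open>\<Lambda> p\<close> vanishes on everything adjoined after \<open>E p\<close> but not on \<open>E p\<close>.\<close>

lemma independent_Un_triangular: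
  assumes "finite J" "triangular J E \<Lambda>" "independent X" "finite X"
    and "\<And>p x. p \<in> J \<Longrightarrow> x \<in> X \<Longrightarrow> \<Lambda> p x = 0"
  shows "independent (X \<union> E ` J) \<and> card (X \<union> E ` J) = card X + card J"
  using assms
proof (induction J rule: finite_linorder_min_induct)
  case (insert b A)
  have "triangular A E \<Lambda>"
    using triangular_subset[OF insert.prems(1)] by blast
  moreover have "\<And>p x. p \<in> A \<Longrightarrow> x \<in> X \<Longrightarrow> \<Lambda> p x = 0"
    using insert.prems(4) by simp
  ultimately have IH: "independent (X \<union> E ` A)" "card (X \<union> E ` A) = card X + card A"
    using insert.IH[OF _ insert.prems(2,3)] by simp_all
  have "\<Lambda> b x = 0" if x: "x \<in> X \<union> E ` A" for x
  proof (cases "x \<in> X")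
    case True
    then show ?thesis using insert.prems(4) by simp
  next
    case False
    then obtain a where "a \<in> A" "x = E a" using x by blast
    then show ?thesis using insert.hyps(2) insert.prems(1) unfolding triangular_def by simp
  qed
  then have "\<Lambda> b x = 0" if "x \<in> span (X \<union> E ` A)" for x
    using pairing_vanishes_on_span that by blast
  moreover have "\<Lambda> b (E b) \<noteq> 0"
    using insert.prems(1) by (simp add: triangular_def)
  ultimately have new: "E b \<notin> span (X \<union> E ` A)" by blast
  then have "E b \<notin> X \<union> E ` A"
    by (metis span_base)
  moreover have "independent (insert (E b) (X \<union> E ` A))"
    using independent_insertI[OF new IH(1)] .
  moreover have "X \<union> E ` insert b A = insert (E b) (X \<union> E ` A)" by blast
  moreover have "finite (X \<union> E ` A)" using insert.hyps(1) insert.prems(3) by blast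
  moreover have "b \<notin> A" using insert.hyps(2) by blast
  ultimately show ?case
    using IH(2) insert.hyps(1) by (simp add: card_insert_disjoint)
qed simp

lemma dim_eq_card_triangular:
  assumes "finite J" "triangular J E \<Lambda>" "E ` J \<subseteq> V"
    and "finite B" "V \<subseteq> span B" "card B \<le> card J"
  shows "dim V = card J"
proof -
  have "independent (E ` J)" "card (E ` J) = card J"
    using independent_Un_triangular[OF assms(1,2) independent_empty] by auto
  then have "card J \<le> dim V"
    using card_independent_le_dim[OF assms(4,5) _ assms(3)] by simp
  moreover have "dim V \<le> card B" using dim_le_card[OF assms(5,4)] .
  ultimately show ?thesis using assms(6) by linarith
qed

lemma dim_subspace_eq_card_triangular:
  assumes "finite J" "triangular J E \<Lambda>" "E ` J \<subseteq> V"
    and "finite B" "V \<subseteq> span B" "card B \<le> card J"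
    and "L \<subseteq> J" "U \<subseteq> V" "E ` L \<subseteq> U" "\<And>p f. p \<in> J - L \<Longrightarrow> f \<in> U \<Longrightarrow> \<Lambda> p f = 0"
  shows "dim U = card L"
proof -
  have J_L: "finite (J - L)" "triangular (J - L) E \<Lambda>" "finite L" "triangular L E \<Lambda>"
    using assms(1,7) triangular_subset[OF assms(2)] by (auto intro: finite_subset)
  have U_span: "U \<subseteq> span B" using assms(5,8) by blast
  have "independent (E ` L)" "card (E ` L) = card L"
    using independent_Un_triangular[OF J_L(3,4) independent_empty] by auto
  then have "card L \<le> dim U"
    using card_independent_le_dim[OF assms(4) U_span _ assms(9)] by simp
  moreover have "dim U + card (J - L) \<le> card J"
  proof -
    obtain BU where BU: "BU \<subseteq> U" "independent BU" "card BU = dim U"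
      by (rule basis_exists)
    have "finite BU"
      using independent_span_bound[OF assms(4) BU(2)] BU(1) U_span by blast
    then have indep: "independent (BU \<union> E ` (J - L))"
      and card: "card (BU \<union> E ` (J - L)) = dim U + card (J - L)"
      using independent_Un_triangular[OF J_L(1,2) BU(2)] BU assms(10) by auto
    have "BU \<union> E ` (J - L) \<subseteq> V" using BU(1) assms(3,8) by blast
    from card_independent_le_dim[OF assms(4,5) indep this]
    show ?thesis unfolding card dim_eq_card_triangular[OF assms(1-6)] .
  qed
  moreover have "card (J - L) = card J - card L"
    using assms(1,7) by (simp add: card_Diff_subset finite_subset)
  moreover have "card L \<le> card J" using assms(1,7) by (simp add: card_mono)
  ultimately show ?thesis by linarith
qed

end

end

interpretation mpoly_vs: vector_space "scal :: 'k::field \<Rightarrow> 'k mpoly \<Rightarrow> 'k mpoly"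
  by unfold_locales (simp_all add: scal_def Const_add Const_mult algebra_simps,
      simp add: Const_def)

lemma coeff_pairing_scal: "coeff_pairing w (scal c f) = c * coeff_pairing w f"
  by (simp add: scal_def coeff_pairing_Const_mult)

section \<open>Vanishing orders at points of \<open>\<P>\<^sup>1 \<times> \<P>\<^sup>1\<close>\<close>

text \<open>The variables \<open>a0, a1\<close> are the coordinates of the first factor and \<open>b0, b1\<close> those of
  the second; the two orders of the factors give the two halves of the theorem.\<close>

locale biprojective_coords =
  fixes a0 a1 b0 b1 :: nat
  assumes distinct_coords: "distinct [a0, a1, b0, b1]"
    and coords: "{a0, a1, b0, b1} = {0, 1, 2, 3}"
begin

definition hasse2 :: "'k::field \<times> 'k \<Rightarrow> 'k \<times> 'k \<Rightarrow> nat \<Rightarrow> nat \<Rightarrow> 'k mpoly \<Rightarrow> 'k" where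
  "hasse2 p q k b = coeff_pairing (\<lambda>\<mu>. hasse_weight (chart_var a0 a1 p) (chart_coord p) k \<mu> *
      hasse_weight (chart_var b0 b1 q) (chart_coord q) b \<mu>)"

definition vanishes_to :: "'k::field \<times> 'k \<Rightarrow> 'k \<times> 'k \<Rightarrow> nat \<Rightarrow> 'k mpoly \<Rightarrow> bool" where
  "vanishes_to p q m f \<longleftrightarrow> (\<forall>k b. k + b < m \<longrightarrow> hasse2 p q k b f = 0)"

definition point_ideal :: "'k::field \<times> 'k \<Rightarrow> 'k \<times> 'k \<Rightarrow> 'k mpoly set" where
  "point_ideal P Q = ideal_gen {point_form a0 a1 P, point_form b0 b1 Q}"

definition fat_ideal :: "'k::field fatpts \<Rightarrow> 'k mpoly set" where
  "fat_ideal Z = {f. inR f} \<inter> (\<Inter>(P, Q, m)\<in>set Z. ideal_pow (point_ideal P Q) m)"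

definition bihom :: "nat \<Rightarrow> nat \<Rightarrow> 'k::field mpoly set" where
  "bihom dA dB = {f. inR f \<and> (\<forall>\<mu>\<in>Poly_Mapping.keys f.
      Poly_Mapping.lookup \<mu> a0 + Poly_Mapping.lookup \<mu> a1 = dA \<and>
      Poly_Mapping.lookup \<mu> b0 + Poly_Mapping.lookup \<mu> b1 = dB)}"

lemma coords_neq: "a0 \<noteq> a1" "b0 \<noteq> b1"
  using distinct_coords by auto

lemma coords_in_range: "a0 \<in> {0,1,2,3}" "a1 \<in> {0,1,2,3}" "b0 \<in> {0,1,2,3}" "b1 \<in> {0,1,2,3}"
  using coords by blast+

lemma hasse2_mult:
  "hasse2 p q k b (f * g) = (\<Sum>k1\<le>k. \<Sum>b1\<le>b. hasse2 p q k1 b1 f * hasse2 p q (k - k1) (b - b1) g)"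
  unfolding hasse2_def by (rule coeff_pairing_hasse_weight2_mult)

lemma hasse2_add: "hasse2 p q k b (f + g) = hasse2 p q k b f + hasse2 p q k b g"
  unfolding hasse2_def by (rule coeff_pairing_add)

lemma hasse2_zero [simp]: "hasse2 p q k b 0 = 0"
  by (simp add: hasse2_def)

lemma hasse2_scal: "hasse2 p q k b (scal c f) = c * hasse2 p q k b f"
  unfolding hasse2_def by (rule coeff_pairing_scal)

text \<open>Each of the two weights only sees its own factor.\<close>

lemma hasse2_binary_forms_mult:
  assumes e: "binary_form a0 a1 dA e" and g: "binary_form b0 b1 dB g"
  shows "hasse2 p q k b (e * g) = hasse_at a0 a1 p k e * hasse_at b0 b1 q b g"
proof -
  let ?va = "chart_var a0 a1 p" and ?vb = "chart_var b0 b1 q"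
  have va: "?va \<notin> {b0, b1}" and vb: "?vb \<notin> {a0, a1}"
    using distinct_coords by (auto simp: chart_var_def)
  have "hasse2 p q k b (e * g) = (\<Sum>\<mu>\<in>Poly_Mapping.keys e. \<Sum>\<nu>\<in>Poly_Mapping.keys g.
      (Poly_Mapping.lookup e \<mu> * hasse_weight ?va (chart_coord p) k \<mu>) *
      (Poly_Mapping.lookup g \<nu> * hasse_weight ?vb (chart_coord q) b \<nu>))"
    unfolding hasse2_def coeff_pairing_mult
  proof (intro sum.cong refl)
    fix \<mu> \<nu> assume "\<mu> \<in> Poly_Mapping.keys e" "\<nu> \<in> Poly_Mapping.keys g"
    then have "Poly_Mapping.lookup \<nu> ?va = 0" "Poly_Mapping.lookup \<mu> ?vb = 0"
      using keys_binary_form_lookup_other[OF g _ va] keys_binary_form_lookup_other[OF e _ vb]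
      by auto
    then show "Poly_Mapping.lookup e \<mu> * Poly_Mapping.lookup g \<nu> *
        (hasse_weight ?va (chart_coord p) k (\<mu> + \<nu>) * hasse_weight ?vb (chart_coord q) b (\<mu> + \<nu>)) =
      Poly_Mapping.lookup e \<mu> * hasse_weight ?va (chart_coord p) k \<mu> *
        (Poly_Mapping.lookup g \<nu> * hasse_weight ?vb (chart_coord q) b \<nu>)"
      by (simp add: hasse_weight_def lookup_add mult_ac)
  qed
  then show ?thesis by (simp add: hasse_at_def coeff_pairing_def sum_product)
qed

lemma binary_forms_mult_in_bihom:
  assumes e: "binary_form a0 a1 dA e" and g: "binary_form b0 b1 dB g"
  shows "e * g \<in> bihom dA dB"
  unfolding bihom_def
proof (intro CollectI conjI ballI)
  show "inR (e * g)"
    using binary_form_inR[OF coords_in_range(1,2) e] binary_form_inR[OF coords_in_range(3,4) g]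
    by (rule inR_mult)
  fix \<mu> assume "\<mu> \<in> Poly_Mapping.keys (e * g)"
  then obtain x y where xy: "\<mu> = x + y" "x \<in> Poly_Mapping.keys e" "y \<in> Poly_Mapping.keys g"
    using keys_mult[of e g] by auto
  have "Poly_Mapping.lookup y a0 = 0" "Poly_Mapping.lookup y a1 = 0"
    "Poly_Mapping.lookup x b0 = 0" "Poly_Mapping.lookup x b1 = 0"
    using keys_binary_form_lookup_other[OF g xy(3)] keys_binary_form_lookup_other[OF e xy(2)]
      distinct_coords by auto
  moreover have "Poly_Mapping.lookup x a0 + Poly_Mapping.lookup x a1 = dA"
    "Poly_Mapping.lookup y b0 + Poly_Mapping.lookup y b1 = dB"
    using e g xy unfolding binary_form_def by auto
  ultimately show "Poly_Mapping.lookup \<mu> a0 + Poly_Mapping.lookup \<mu> a1 = dA"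
    "Poly_Mapping.lookup \<mu> b0 + Poly_Mapping.lookup \<mu> b1 = dB"
    using xy(1) by (simp_all add: lookup_add)
qed

definition bimonomial :: "nat \<Rightarrow> nat \<Rightarrow> nat \<Rightarrow> nat \<Rightarrow> (nat \<Rightarrow>\<^sub>0 nat)" where
  "bimonomial dA dB c e = Poly_Mapping.single a0 c + Poly_Mapping.single a1 (dA - c) +
     Poly_Mapping.single b0 e + Poly_Mapping.single b1 (dB - e)"

lemma keys_bihom_eq_bimonomial:
  assumes "f \<in> bihom dA dB" "\<mu> \<in> Poly_Mapping.keys f"
  shows "\<mu> = bimonomial dA dB (Poly_Mapping.lookup \<mu> a0) (Poly_Mapping.lookup \<mu> b0)"
proof (rule poly_mapping_eqI)
  fix v
  have "Poly_Mapping.lookup \<mu> a0 + Poly_Mapping.lookup \<mu> a1 = dA"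
    "Poly_Mapping.lookup \<mu> b0 + Poly_Mapping.lookup \<mu> b1 = dB"
    "Poly_Mapping.keys \<mu> \<subseteq> {a0, a1, b0, b1}"
    using assms coords unfolding bihom_def inR_def by auto
  then show "Poly_Mapping.lookup \<mu> v =
      Poly_Mapping.lookup (bimonomial dA dB (Poly_Mapping.lookup \<mu> a0) (Poly_Mapping.lookup \<mu> b0)) v"
    using distinct_coords
    by (cases "v \<in> {a0, a1, b0, b1}") (auto simp: bimonomial_def lookup_add lookup_single in_keys_iff)
qed

lemma bihom_subset_span_bimonomials:
  "bihom dA dB \<subseteq>
    mpoly_vs.span ((\<lambda>(c, e). Poly_Mapping.single (bimonomial dA dB c e) (1::'k::field)) ` ({..dA} \<times> {..dB}))"
proof
  fix f :: "'k mpoly" assume f: "f \<in> bihom dA dB"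
  have "f = (\<Sum>\<mu>\<in>Poly_Mapping.keys f. scal (Poly_Mapping.lookup f \<mu>) (Poly_Mapping.single \<mu> 1))"
    by (subst poly_mapping_sum_single) (simp add: scal_def Const_def mult_single)
  also have "\<dots> \<in> mpoly_vs.span
      ((\<lambda>(c, e). Poly_Mapping.single (bimonomial dA dB c e) 1) ` ({..dA} \<times> {..dB}))"
  proof (intro mpoly_vs.span_sum mpoly_vs.span_scale mpoly_vs.span_base)
    fix \<mu> assume \<mu>: "\<mu> \<in> Poly_Mapping.keys f"
    have "Poly_Mapping.lookup \<mu> a0 \<le> dA" "Poly_Mapping.lookup \<mu> b0 \<le> dB"
      using f \<mu> unfolding bihom_def by force+
    with keys_bihom_eq_bimonomial[OF f \<mu>]
    show "Poly_Mapping.single \<mu> 1 \<in> (\<lambda>(c, e). Poly_Mapping.single (bimonomial dA dB c e) 1) ` ({..dA} \<times> {..dB})"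
      by (intro rev_image_eqI[of "(Poly_Mapping.lookup \<mu> a0, Poly_Mapping.lookup \<mu> b0)"]) simp_all
  qed
  finally show "f \<in> mpoly_vs.span ((\<lambda>(c, e). Poly_Mapping.single (bimonomial dA dB c e) 1) ` ({..dA} \<times> {..dB}))" .
qed

lemma vanishes_to_mult_left:
  assumes "vanishes_to p q m f"
  shows "vanishes_to p q m (g * f)"
  unfolding vanishes_to_def
proof (intro allI impI)
  fix k b :: nat assume kb: "k + b < m"
  have "hasse2 p q k1 b1 g * hasse2 p q (k - k1) (b - b1) f = 0" if "k1 \<le> k" "b1 \<le> b" for k1 b1
    using assms kb that unfolding vanishes_to_def by simp
  then show "hasse2 p q k b (g * f) = 0"
    unfolding hasse2_mult by (simp add: sum.neutral)
qed

lemma vanishes_to_Suc_mult: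
  assumes "vanishes_to p q m f" "vanishes_to p q 1 g"
  shows "vanishes_to p q (Suc m) (f * g)"
  unfolding vanishes_to_def
proof (intro allI impI)
  fix k b :: nat assume kb: "k + b < Suc m"
  have "hasse2 p q k1 b1 f * hasse2 p q (k - k1) (b - b1) g = 0" if "k1 \<le> k" "b1 \<le> b" for k1 b1
  proof -
    have "k1 + b1 < m \<or> (k - k1) + (b - b1) < 1" using kb that by linarith
    then show ?thesis using assms unfolding vanishes_to_def by auto
  qed
  then show "hasse2 p q k b (f * g) = 0"
    unfolding hasse2_mult by (simp add: sum.neutral)
qed

lemma vanishes_to_sum:
  "(\<And>i. i \<in> I \<Longrightarrow> vanishes_to p q m (F i)) \<Longrightarrow> vanishes_to p q m (sum F I)"
  unfolding vanishes_to_def by (induction I rule: infinite_finite_induct) (simp_all add: hasse2_add)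

lemma vanishes_to_ideal_gen:
  assumes "\<And>s. s \<in> S \<Longrightarrow> vanishes_to p q m s" "x \<in> ideal_gen S"
  shows "vanishes_to p q m x"
proof -
  obtain n :: nat and c s where x: "x = (\<Sum>l<n. c l * s l)" and "\<And>l. l < n \<Longrightarrow> s l \<in> S"
    using assms(2) by (blast elim: ideal_genE)
  then show ?thesis
    unfolding x by (intro vanishes_to_sum vanishes_to_mult_left assms(1)) simp
qed

lemma vanishes_to_ideal_pow:
  assumes "\<And>s. s \<in> S \<Longrightarrow> vanishes_to p q 1 s"
  shows "x \<in> ideal_pow (ideal_gen S) m \<Longrightarrow> vanishes_to p q m x"
proof (induction m arbitrary: x)
  case 0
  then show ?case by (simp add: vanishes_to_def)
next
  case (Suc m)
  have "vanishes_to p q (Suc m) y"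
    if y: "y \<in> {a * b |a b. a \<in> ideal_pow (ideal_gen S) m \<and> b \<in> ideal_gen S}" for y
  proof -
    obtain a b where "y = a * b" "a \<in> ideal_pow (ideal_gen S) m" "b \<in> ideal_gen S"
      using y by blast
    moreover have "vanishes_to p q 1 b"
      using vanishes_to_ideal_gen[of S p q 1 b] assms \<open>b \<in> ideal_gen S\<close> by blast
    ultimately show ?thesis
      using Suc.IH[of a] vanishes_to_Suc_mult[of p q m a b] by simp
  qed
  moreover have "x \<in> ideal_gen {a * b |a b. a \<in> ideal_pow (ideal_gen S) m \<and> b \<in> ideal_gen S}"
    using Suc.prems by (simp add: ideal_prod_def)
  ultimately show ?case
    by (rule vanishes_to_ideal_gen)
qed

lemma hasse2_point_form_pnorm:
  assumes "P \<noteq> (0, 0)" "Q \<noteq> (0, 0)"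
  shows "hasse2 (pnorm P) (pnorm Q) 0 0 (point_form a0 a1 P) = 0"
    and "hasse2 (pnorm P) (pnorm Q) 0 0 (point_form b0 b1 Q) = 0"
proof -
  have "hasse2 (pnorm P) (pnorm Q) 0 0 (point_form a0 a1 P * 1) =
      hasse_at a0 a1 (pnorm P) 0 (point_form a0 a1 P) * hasse_at b0 b1 (pnorm Q) 0 1"
    by (rule hasse2_binary_forms_mult[OF binary_form_point_form[OF coords_neq(1)] binary_form_one])
  then show "hasse2 (pnorm P) (pnorm Q) 0 0 (point_form a0 a1 P) = 0"
    by (simp add: hasse_at_point_form_pnorm[OF coords_neq(1) assms(1)])
  have "hasse2 (pnorm P) (pnorm Q) 0 0 (1 * point_form b0 b1 Q) =
      hasse_at a0 a1 (pnorm P) 0 1 * hasse_at b0 b1 (pnorm Q) 0 (point_form b0 b1 Q)"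
    by (rule hasse2_binary_forms_mult[OF binary_form_one binary_form_point_form[OF coords_neq(2)]])
  then show "hasse2 (pnorm P) (pnorm Q) 0 0 (point_form b0 b1 Q) = 0"
    by (simp add: hasse_at_point_form_pnorm[OF coords_neq(2) assms(2)])
qed

lemma vanishes_to_point_ideal_pow:
  assumes "P \<noteq> (0, 0)" "Q \<noteq> (0, 0)" "f \<in> ideal_pow (point_ideal P Q) m"
  shows "vanishes_to (pnorm P) (pnorm Q) m f"
  using assms(3) unfolding point_ideal_def
  by (rule vanishes_to_ideal_pow[rotated])
    (use hasse2_point_form_pnorm[OF assms(1,2)] in \<open>auto simp: vanishes_to_def\<close>)

lemma point_form_pnorm_mem_point_ideal:
  assumes "P \<noteq> (0, 0)" "Q \<noteq> (0, 0)"
  shows "point_form a0 a1 (pnorm P) \<in> point_ideal P Q" "point_form b0 b1 (pnorm Q) \<in> point_ideal P Q"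
proof -
  obtain c where "point_form a0 a1 (pnorm P) = Const c * point_form a0 a1 P"
    using point_form_pnorm_eq_Const_mult[OF assms(1)] .
  then show "point_form a0 a1 (pnorm P) \<in> point_ideal P Q"
    unfolding point_ideal_def by (simp add: ideal_gen_memI)
  obtain c where "point_form b0 b1 (pnorm Q) = Const c * point_form b0 b1 Q"
    using point_form_pnorm_eq_Const_mult[OF assms(2)] .
  then show "point_form b0 b1 (pnorm Q) \<in> point_ideal P Q"
    unfolding point_ideal_def by (simp add: ideal_gen_memI)
qed

lemma point_forms_mult_mem_ideal_pow:
  assumes "P \<noteq> (0, 0)" "Q \<noteq> (0, 0)" "inR g" "inR h" "m \<le> a + b"
  shows "(point_form a0 a1 (pnorm P) ^ a * g) * (point_form b0 b1 (pnorm Q) ^ b * h)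
     \<in> ideal_pow (point_ideal P Q) m"
proof -
  let ?u = "point_form a0 a1 (pnorm P)" and ?v = "point_form b0 b1 (pnorm Q)"
  have uv_R: "inR ?u" "inR ?v"
    unfolding point_form_def by (intro inR_diff inR_mult inR_Var inR_Const coords_in_range)+
  define a' where "a' = min a m"
  define b' where "b' = m - a'"
  have ab: "a' \<le> a" "b' \<le> b" "b' + a' = m" using assms(5) unfolding a'_def b'_def by auto
  define r where "r = ?u ^ (a - a') * g * ?v ^ (b - b') * h"
  have "inR r" unfolding r_def using uv_R assms(3,4) by (intro inR_mult inR_power)
  then have "?u ^ a' * (?v ^ b' * r) \<in> ideal_pow (point_ideal P Q) (0 + b' + a')"
    by (intro power_mult_mem_ideal_pow point_form_pnorm_mem_point_ideal assms(1,2)) simp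
  moreover have "(?u ^ a * g) * (?v ^ b * h) = ?u ^ a' * (?v ^ b' * r)"
  proof -
    have "?u ^ a = ?u ^ a' * ?u ^ (a - a')" "?v ^ b = ?v ^ b' * ?v ^ (b - b')"
      using ab by (simp_all flip: power_add)
    then show ?thesis unfolding r_def by (simp only: mult_ac)
  qed
  ultimately show ?thesis using ab by simp
qed

end

definition greedy_fill :: "(nat \<Rightarrow> nat) \<Rightarrow> nat \<Rightarrow> nat \<Rightarrow> nat" where
  "greedy_fill c B s = min (c s) (B - (\<Sum>i<s. c i))"

lemma sum_greedy_fill: "(\<Sum>s<n. greedy_fill c B s) = min (\<Sum>s<n. c s) B"
  by (induction n) (auto simp: greedy_fill_def)

lemma greedy_fill_le: "greedy_fill c B s \<le> c s"
  by (simp add: greedy_fill_def)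

lemma greedy_fill_eq:
  assumes "(\<Sum>i<n. c i) \<le> B" "s < n"
  shows "greedy_fill c B s = c s"
proof -
  have "(\<Sum>i<Suc s. c i) \<le> (\<Sum>i<n. c i)"
    using assms(2) by (intro sum_mono2) auto
  then show ?thesis using assms(1) by (simp add: greedy_fill_def)
qed

lemma sum_filter_mset_ge: "(\<Sum>k=1..n. size (filter_mset (\<lambda>a. k \<le> a) A)) = (\<Sum>a\<in>#A. min a n)"
proof (induction A)
  case (add x A)
  have "size (filter_mset (\<lambda>a. k \<le> a) (add_mset x A)) =
      size (filter_mset (\<lambda>a. k \<le> a) A) + (if k \<le> x then 1 else 0)" for k
    by simp
  then have "(\<Sum>k=1..n. size (filter_mset (\<lambda>a. k \<le> a) (add_mset x A))) =
      (\<Sum>k=1..n. size (filter_mset (\<lambda>a. k \<le> a) A)) + (\<Sum>k=1..n. if k \<le> x then 1 else 0)"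
    by (simp only: sum.distrib)
  also have "(\<Sum>k=1..n. if k \<le> x then 1 else 0) = card ({1..n} \<inter> {k. k \<le> x})"
    by (simp add: sum.If_cases)
  also have "{1..n} \<inter> {k. k \<le> x} = {1..min n x}" by auto
  finally show ?case using add by (simp add: min.commute)
qed simp

lemma sum_nth_distinct: "distinct ps \<Longrightarrow> (\<Sum>i<length ps. f (ps ! i)) = (\<Sum>p\<in>set ps. f p)"
  using sum.reindex_bij_betw[OF bij_betw_nth[of ps "{..<length ps}" "set ps"], of f] by simp

lemma sum_mset_sum:
  "(\<Sum>a\<in>#(\<Sum>i\<in>I. M i). f a) = (\<Sum>i\<in>I. \<Sum>a\<in>#M i. f a)"
  by (induction I rule: infinite_finite_induct) auto

lemma sum_mset_mset_map_upt: "(\<Sum>a\<in>#mset (map g [0..<n]). f a) = (\<Sum>k<n. f (g k))"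
  by (simp add: sum_unfold_sum_mset multiset.map_comp comp_def atLeast0LessThan)

lemma sum_mset_alpha:
  "(\<Sum>a\<in>#alpha Z. f a) = (\<Sum>R\<in>proj1 Z. \<Sum>k<Max ((\<lambda>Q. mult Z R Q) ` proj2 Z).
      f (\<Sum>Q\<in>proj2 Z. mult Z R Q - k))"
  unfolding alpha_def sum_mset_sum sum_mset_mset_map_upt ..

lemma size_alpha: "size (alpha Z) = (\<Sum>R\<in>proj1 Z. Max ((\<lambda>Q. mult Z R Q) ` proj2 Z))"
proof -
  have "size (alpha Z) = (\<Sum>a\<in>#alpha Z. 1)" by (rule size_eq_sum_mset)
  also have "\<dots> = (\<Sum>R\<in>proj1 Z. \<Sum>k<Max ((\<lambda>Q. mult Z R Q) ` proj2 Z). 1)"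
    by (rule sum_mset_alpha)
  finally show ?thesis by simp
qed

lemma filter_eq_key_distinct:
  assumes "distinct (map f xs)" "x \<in> set xs"
  shows "filter (\<lambda>y. f y = f x) xs = [x]"
  using assms
proof (induction xs)
  case (Cons a xs)
  show ?case
  proof (cases "a = x")
    case True
    then have "filter (\<lambda>y. f y = f x) xs = []"
      using Cons.prems by (auto simp: filter_empty_conv image_iff)
    then show ?thesis using True by simp
  next
    case False
    then show ?thesis using Cons by auto
  qed
qed simp

lemma mult_entry:
  assumes "fat_point_scheme Z" "(P, Q, m) \<in> set Z"
  shows "mult Z (pnorm P) (pnorm Q) = m"
proof -
  let ?key = "\<lambda>(P, Q, m). (pnorm P, pnorm Q)"
  have "distinct (map ?key Z)" using assms(1) by (simp add: fat_point_scheme_def)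
  then have "filter (\<lambda>z. ?key z = ?key (P, Q, m)) Z = [(P, Q, m)]"
    using assms(2) by (rule filter_eq_key_distinct)
  moreover have "filter (\<lambda>(P', Q', m). pnorm P' = pnorm P \<and> pnorm Q' = pnorm Q) Z =
      filter (\<lambda>z. ?key z = ?key (P, Q, m)) Z"
    by (intro filter_cong) auto
  ultimately show ?thesis by (simp add: mult_def)
qed

lemma fat_point_scheme_entry:
  assumes "fat_point_scheme Z" "(P, Q, m) \<in> set Z"
  shows "P \<noteq> (0, 0)" "Q \<noteq> (0, 0)"
  using assms unfolding fat_point_scheme_def by fastforce+

lemma mult_pos_imp_entry:
  assumes "mult Z R Q > 0"
  obtains P Q' m where "(P, Q', m) \<in> set Z" "pnorm P = R" "pnorm Q' = Q"
proof -
  have "filter (\<lambda>(P', Q', m). pnorm P' = R \<and> pnorm Q' = Q) Z \<noteq> []"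
    using assms by (auto simp: mult_def)
  then show thesis using that by (auto simp: filter_empty_conv)
qed

lemma mult_eq_0_if_notin_proj:
  assumes "R \<notin> proj1 Z \<or> Q \<notin> proj2 Z"
  shows "mult Z R Q = 0"
proof (rule ccontr)
  assume "mult Z R Q \<noteq> 0"
  then obtain P Q' m where "(P, Q', m) \<in> set Z" "pnorm P = R" "pnorm Q' = Q"
    using mult_pos_imp_entry by blast
  then have "R \<in> proj1 Z" "Q \<in> proj2 Z"
    unfolding proj1_def proj2_def by (force intro: rev_image_eqI)+
  then show False using assms by blast
qed

lemma finite_proj: "finite (proj1 Z)" "finite (proj2 Z)"
  by (simp_all add: proj1_def proj2_def)

lemma normal_point_proj: "R \<in> proj1 Z \<Longrightarrow> normal_point R" "Q \<in> proj2 Z \<Longrightarrow> normal_point Q"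
  by (auto simp: proj1_def proj2_def normal_point_pnorm)

lemma alg_closed_field_infinite: "infinite (UNIV :: 'k::alg_closed_field set)"
proof
  assume fin: "finite (UNIV :: 'k set)"
  let ?q = "\<Prod>a\<in>(UNIV :: 'k set). [:-a, 1:]"
  have "degree ?q = card (UNIV :: 'k set)"
    by (subst degree_prod_eq_sum_degree) auto
  moreover have "card (UNIV :: 'k set) > 0" using fin by (simp add: card_gt_0_iff)
  ultimately have "degree (?q + 1) > 0"
    by (subst degree_add_eq_left) auto
  then obtain x where "poly (?q + 1) x = 0" using alg_closed_imp_poly_has_root by blast
  moreover have "poly ?q x = 0"
    unfolding poly_prod using fin by (intro prod_zero) (auto intro!: bexI[of _ x])
  ultimately show False by simp
qed

lemma exists_normal_point_notin:
  assumes "infinite (UNIV :: 'k::field set)" "finite (S :: ('k \<times> 'k) set)"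
  obtains p where "normal_point p" "p \<notin> S"
proof -
  obtain t where "t \<notin> snd ` S"
    using ex_new_if_finite[OF assms(1)] assms(2) by blast
  then have "(1, t) \<notin> S" by (metis image_eqI snd_conv)
  then show thesis by (intro that[of "(1, t)"]) (auto simp: normal_point_def)
qed

section \<open>A triangular system for a fat point ideal in a fixed bidegree\<close>

text \<open>The index \<open>((r, k), (s, b))\<close> stands for the Hasse derivative of order \<open>(k, b)\<close> at the
  point \<open>(xpts ! r, ypts ! s)\<close>. The lists \<open>xpts\<close>, \<open>ypts\<close> enumerate the projections of the
  support followed by one new point each; the orders in the last column \<open>s = length ys\<close>
  fill up the bidegree and index the part of the basis lying in the ideal.\<close>

locale fat_point_frame = biprojective_coords a0 a1 b0 b1 for a0 a1 b0 b1 :: nat +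
  fixes Z :: "'k::field fatpts" and xs ys :: "('k \<times> 'k) list" and x_new y_new :: "'k \<times> 'k"
    and dA dB :: nat
  assumes fat: "fat_point_scheme Z"
    and xs: "distinct xs" "set xs = proj1 Z"
    and ys: "distinct ys" "set ys = proj2 Z"
    and x_new: "normal_point x_new" "x_new \<notin> proj1 Z"
    and y_new: "normal_point y_new" "y_new \<notin> proj2 Z"
    and alpha_size: "size (alpha Z) \<le> dA + 1"
begin

definition xpts :: "('k \<times> 'k) list" where
  "xpts = xs @ [x_new]"

definition ypts :: "('k \<times> 'k) list" where
  "ypts = ys @ [y_new]"

definition mult_at :: "nat \<Rightarrow> nat \<Rightarrow> nat" where
  "mult_at r s = mult Z (xpts ! r) (ypts ! s)"

definition row_len :: "nat \<Rightarrow> nat" where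
  "row_len r = Max ((\<lambda>Q. mult Z (xs ! r) Q) ` proj2 Z)"

definition x_order :: "nat \<Rightarrow> nat" where
  "x_order r = (if r < length xs then row_len r else dA + 1 - size (alpha Z))"

definition y_order :: "nat \<Rightarrow> nat \<Rightarrow> nat \<Rightarrow> nat" where
  "y_order r k = greedy_fill (\<lambda>s. if s < length ys then mult_at r s - k else dB + 1) (dB + 1)"

definition x_indices :: "(nat \<times> nat) set" where
  "x_indices = (SIGMA r:{..<length xpts}. {..<x_order r})"

definition indices :: "((nat \<times> nat) \<times> (nat \<times> nat)) set" where
  "indices = (SIGMA rk:x_indices. SIGMA s:{..<length ypts}. {..<y_order (fst rk) (snd rk) s})"

definition ideal_indices :: "((nat \<times> nat) \<times> (nat \<times> nat)) set" where
  "ideal_indices = (SIGMA rk:x_indices. {length ys} \<times> {..<y_order (fst rk) (snd rk) (length ys)})"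

definition basis_form :: "(nat \<times> nat) \<times> (nat \<times> nat) \<Rightarrow> 'k mpoly" where
  "basis_form = (\<lambda>((r, k), (s, b)).
     dual_form a0 a1 xpts x_order dA r k * dual_form b0 b1 ypts (y_order r k) dB s b)"

definition hasse_functional :: "(nat \<times> nat) \<times> (nat \<times> nat) \<Rightarrow> 'k mpoly \<Rightarrow> 'k" where
  "hasse_functional = (\<lambda>((r, k), (s, b)). hasse2 (xpts ! r) (ypts ! s) k b)"

lemma length_xpts: "length xpts = Suc (length xs)"
  and length_ypts: "length ypts = Suc (length ys)"
  by (simp_all add: xpts_def ypts_def)

lemma xpts_nth: "r < length xs \<Longrightarrow> xpts ! r = xs ! r"
  and ypts_nth: "s < length ys \<Longrightarrow> ypts ! s = ys ! s"
  by (simp_all add: xpts_def ypts_def nth_append)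

lemma distinct_xpts: "distinct xpts"
  and distinct_ypts: "distinct ypts"
  using xs ys x_new y_new by (simp_all add: xpts_def ypts_def)

lemma normal_point_xpts: "p \<in> set xpts \<Longrightarrow> normal_point p"
  using xs(2) x_new(1) normal_point_proj(1)[of p Z] by (auto simp: xpts_def)

lemma normal_point_ypts: "q \<in> set ypts \<Longrightarrow> normal_point q"
  using ys(2) y_new(1) normal_point_proj(2)[of q Z] by (auto simp: ypts_def)

lemma mult_at_eq_0:
  assumes "r < length xpts" "s < length ypts" "r = length xs \<or> s = length ys"
  shows "mult_at r s = 0"
proof -
  have "xpts ! r \<notin> proj1 Z \<or> ypts ! s \<notin> proj2 Z"
    using assms(3) x_new(2) y_new(2) by (auto simp: xpts_def ypts_def)
  then show ?thesis unfolding mult_at_def by (rule mult_eq_0_if_notin_proj)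
qed

lemma mult_at_le_x_order:
  assumes "r < length xs" "s < length ypts"
  shows "mult_at r s \<le> x_order r"
proof (cases "s < length ys")
  case True
  have "ys ! s \<in> proj2 Z" using True ys(2) nth_mem by blast
  then have "mult Z (xs ! r) (ys ! s) \<le> row_len r"
    unfolding row_len_def using finite_proj(2) by (intro Max_ge finite_imageI imageI)
  then show ?thesis
    using assms(1) True by (simp add: mult_at_def x_order_def xpts_nth ypts_nth)
next
  case False
  then have "s = length ys" using assms(2) by (simp add: length_ypts)
  moreover have "r < length xpts" using assms(1) by (simp add: length_xpts)
  ultimately show ?thesis using mult_at_eq_0 assms(2) by simp
qed

lemma sum_x_order: "(\<Sum>r<length xpts. x_order r) = dA + 1"
proof -
  have "size (alpha Z) = (\<Sum>r<length xs. row_len r)"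
    unfolding size_alpha row_len_def
    using sum_nth_distinct[OF xs(1), of "\<lambda>R. Max ((\<lambda>Q. mult Z R Q) ` proj2 Z)"] xs(2) by simp
  then show ?thesis
    using alpha_size by (simp add: length_xpts x_order_def)
qed

lemma sum_y_order: "(\<Sum>s<length ypts. y_order r k s) = dB + 1"
  unfolding y_order_def length_ypts sum_greedy_fill by simp

lemma y_order_le: "s < length ys \<Longrightarrow> y_order r k s \<le> mult_at r s - k"
  using greedy_fill_le[of "\<lambda>s. if s < length ys then mult_at r s - k else dB + 1" "dB + 1" s]
  by (simp add: y_order_def)

lemma sum_y_order_ys:
  "(\<Sum>s<length ys. y_order r k s) = min (\<Sum>s<length ys. mult_at r s - k) (dB + 1)"
  unfolding y_order_def sum_greedy_fill by simp

lemma y_order_eq_if_last_pos: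
  assumes "0 < y_order r k (length ys)" "s < length ys"
  shows "y_order r k s = mult_at r s - k"
proof -
  have "(\<Sum>s<length ys. mult_at r s - k) \<le> dB + 1"
    using assms(1) by (simp add: y_order_def greedy_fill_def)
  then show ?thesis
    using greedy_fill_eq[where n = "length ys" and c = "\<lambda>s. if s < length ys then mult_at r s - k else dB + 1"]
      assms(2) by (simp add: y_order_def)
qed

lemma mem_indices:
  "((r, k), (s, b)) \<in> indices \<longleftrightarrow>
    r < length xpts \<and> k < x_order r \<and> s < length ypts \<and> b < y_order r k s"
  by (simp add: indices_def x_indices_def)

lemma mem_ideal_indices:
  "((r, k), (s, b)) \<in> ideal_indices \<longleftrightarrow>
    r < length xpts \<and> k < x_order r \<and> s = length ys \<and> b < y_order r k s"
  by (auto simp: ideal_indices_def x_indices_def)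

lemma ideal_indices_subset: "ideal_indices \<subseteq> indices"
  by (auto simp: indices_def ideal_indices_def length_ypts)

lemma indices_diff_ideal_indices:
  "indices - ideal_indices = (SIGMA rk:x_indices. SIGMA s:{..<length ys}. {..<y_order (fst rk) (snd rk) s})"
  by (auto simp: indices_def ideal_indices_def length_ypts less_Suc_eq)

lemma finite_x_indices: "finite x_indices"
  by (simp add: x_indices_def)

lemma finite_indices: "finite indices"
  by (simp add: indices_def finite_x_indices)

lemma card_indices: "card indices = (dA + 1) * (dB + 1)"
proof -
  have "card x_indices = dA + 1"
    using sum_x_order by (simp add: x_indices_def)
  then show ?thesis
    by (simp add: indices_def finite_x_indices sum_y_order del: sum.lessThan_Suc)
qed

lemma card_indices_diff_ideal_indices:
  "card (indices - ideal_indices) = (\<Sum>a\<in>#alpha Z. min a (dB + 1))"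
proof -
  let ?f = "\<lambda>r k. min (\<Sum>s<length ys. mult_at r s - k) (dB + 1)"
  have "card (indices - ideal_indices) = (\<Sum>rk\<in>x_indices. ?f (fst rk) (snd rk))"
    unfolding indices_diff_ideal_indices by (simp add: sum_y_order_ys x_indices_def)
  also have "\<dots> = (\<Sum>r<length xpts. \<Sum>k<x_order r. ?f r k)"
    unfolding x_indices_def by (simp add: sum.Sigma case_prod_beta)
  also have "\<dots> = (\<Sum>r<length xs. \<Sum>k<row_len r. ?f r k)"
  proof -
    have "mult_at (length xs) s = 0" if "s < length ys" for s
      using that by (intro mult_at_eq_0) (simp_all add: length_xpts length_ypts)
    then show ?thesis by (simp add: length_xpts x_order_def)
  qed
  also have "\<dots> = (\<Sum>R\<in>proj1 Z. \<Sum>k<Max ((\<lambda>Q. mult Z R Q) ` proj2 Z).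
      min (\<Sum>Q\<in>proj2 Z. mult Z R Q - k) (dB + 1))"
  proof -
    have "(\<Sum>s<length ys. mult_at r s - k) = (\<Sum>Q\<in>proj2 Z. mult Z (xs ! r) Q - k)"
      if "r < length xs" for r k
      using that sum_nth_distinct[OF ys(1), of "\<lambda>Q. mult Z (xs ! r) Q - k"]
      by (simp add: ys(2) mult_at_def xpts_nth ypts_nth)
    then show ?thesis
      using sum_nth_distinct[OF xs(1), of "\<lambda>R. \<Sum>k<Max ((\<lambda>Q. mult Z R Q) ` proj2 Z).
          min (\<Sum>Q\<in>proj2 Z. mult Z R Q - k) (dB + 1)"]
      by (simp add: xs(2) row_len_def)
  qed
  also have "\<dots> = (\<Sum>a\<in>#alpha Z. min a (dB + 1))"
    by (rule sum_mset_alpha[symmetric])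
  finally show ?thesis .
qed

lemma binary_form_x_dual:
  "r < length xpts \<Longrightarrow> k < x_order r \<Longrightarrow> binary_form a0 a1 dA (dual_form a0 a1 xpts x_order dA r k)"
  using distinct_coords sum_x_order by (intro binary_form_dual_form) auto

lemma binary_form_y_dual:
  "s < length ypts \<Longrightarrow> b < y_order r k s \<Longrightarrow>
    binary_form b0 b1 dB (dual_form b0 b1 ypts (y_order r k) dB s b)"
  using distinct_coords sum_y_order by (intro binary_form_dual_form) auto

lemma basis_form_in_bihom: "q \<in> indices \<Longrightarrow> basis_form q \<in> bihom dA dB"
  by (cases q) (auto simp: basis_form_def mem_indices
      intro!: binary_forms_mult_in_bihom binary_form_x_dual binary_form_y_dual)

lemma hasse_functional_basis_form:
  assumes "((r', k'), (s', b')) \<in> indices"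
  shows "hasse_functional ((r, k), (s, b)) (basis_form ((r', k'), (s', b'))) =
    hasse_at a0 a1 (xpts ! r) k (dual_form a0 a1 xpts x_order dA r' k') *
    hasse_at b0 b1 (ypts ! s) b (dual_form b0 b1 ypts (y_order r' k') dB s' b')"
proof -
  have "r' < length xpts" "k' < x_order r'" "s' < length ypts" "b' < y_order r' k' s'"
    using assms by (simp_all add: mem_indices)
  then show ?thesis
    unfolding hasse_functional_def basis_form_def
    by (simp add: hasse2_binary_forms_mult[OF binary_form_x_dual binary_form_y_dual])
qed

lemma triangular_indices: "triangular indices basis_form hasse_functional"
  unfolding triangular_def
proof (intro conjI ballI impI)
  fix p assume p: "p \<in> indices"
  obtain r k s b where p_eq: "p = ((r, k), (s, b))" by (cases p) auto
  have "r < length xpts" "s < length ypts"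
    using p by (simp_all add: p_eq mem_indices)
  then have "hasse_at a0 a1 (xpts ! r) k (dual_form a0 a1 xpts x_order dA r k) \<noteq> 0"
    "hasse_at b0 b1 (ypts ! s) b (dual_form b0 b1 ypts (y_order r k) dB s b) \<noteq> 0"
    using hasse_at_dual_form_neq_0[OF coords_neq(1) _ distinct_xpts normal_point_xpts]
      hasse_at_dual_form_neq_0[OF coords_neq(2) _ distinct_ypts normal_point_ypts] by blast+
  then show "hasse_functional p (basis_form p) \<noteq> 0"
    using p unfolding p_eq by (simp add: hasse_functional_basis_form)
next
  fix p q assume p: "p \<in> indices" and q: "q \<in> indices" and "p < q"
  obtain r k s b where p_eq: "p = ((r, k), (s, b))" by (cases p) auto
  obtain r' k' s' b' where q_eq: "q = ((r', k'), (s', b'))" by (cases q) auto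
  have p_le: "r < length xpts" "k < x_order r" "s < length ypts" "b < y_order r k s"
    using p by (simp_all add: p_eq mem_indices)
  have "(r, k) < (r', k') \<or> (r, k) = (r', k') \<and> (s, b) < (s', b')"
    using \<open>p < q\<close> by (auto simp: p_eq q_eq less_prod_def)
  then consider "r' \<noteq> r \<or> k < k'" | "r' = r" "k' = k" "s' \<noteq> s \<or> b < b'"
    by (auto simp: less_prod_def)
  then show "hasse_functional p (basis_form q) = 0"
  proof cases
    case 1
    then have "hasse_at a0 a1 (xpts ! r) k (dual_form a0 a1 xpts x_order dA r' k') = 0"
      using p_le normal_point_xpts by (intro hasse_at_dual_form_eq_0 coords_neq(1)) auto
    then show ?thesis using q by (simp add: p_eq q_eq hasse_functional_basis_form)
  next
    case 2
    then have "hasse_at b0 b1 (ypts ! s) b (dual_form b0 b1 ypts (y_order r' k') dB s' b') = 0"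
      using p_le normal_point_ypts by (intro hasse_at_dual_form_eq_0 coords_neq(2)) auto
    then show ?thesis using q by (simp add: p_eq q_eq hasse_functional_basis_form)
  qed
qed

text \<open>The orders of a basis form of the last column add up to at least the multiplicity at
  every point of the support: off its own row by the choice of \<open>x_order\<close>, on its own row
  because a positive order in the last column means the truncation in \<open>y_order\<close> did not
  bite.\<close>

lemma mult_at_le_orders:
  assumes "((r, k), (s, b)) \<in> ideal_indices" "r0 < length xs" "s0 < length ys"
  shows "mult_at r0 s0 \<le> (if r0 = r then k else x_order r0) + y_order r k s0"
proof (cases "r0 = r")
  case True
  have "0 < y_order r k (length ys)" using assms(1) by (auto simp: mem_ideal_indices)
  then show ?thesis using True y_order_eq_if_last_pos assms(3) by simp
next
  case False
  have "mult_at r0 s0 \<le> x_order r0"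
    using mult_at_le_x_order[OF assms(2)] assms(3) by (simp add: length_ypts)
  then show ?thesis using False by simp
qed

lemma basis_form_in_point_ideal_pow:
  assumes q: "q \<in> ideal_indices" and PQ: "(P, Q, m) \<in> set Z"
  shows "basis_form q \<in> ideal_pow (point_ideal P Q) m"
proof -
  obtain r k s b where q_eq: "q = ((r, k), (s, b))" by (cases q) auto
  have q_le: "r < length xpts" "s = length ys"
    using q by (simp_all add: q_eq mem_ideal_indices)
  have P0: "P \<noteq> (0, 0)" and Q0: "Q \<noteq> (0, 0)"
    using fat_point_scheme_entry[OF fat PQ] by simp_all
  have "pnorm P \<in> proj1 Z" "pnorm Q \<in> proj2 Z"
    using PQ unfolding proj1_def proj2_def by (force intro: rev_image_eqI)+
  then have "pnorm P \<in> set xs" "pnorm Q \<in> set ys"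
    by (simp_all only: xs(2) ys(2))
  then obtain r0 s0 where r0: "r0 < length xs" "xs ! r0 = pnorm P"
    and s0: "s0 < length ys" "ys ! s0 = pnorm Q"
    by (auto simp: in_set_conv_nth)
  have m: "m = mult_at r0 s0"
    using mult_entry[OF fat PQ] r0 s0 by (simp add: mult_at_def xpts_nth ypts_nth)
  let ?eA = "if r0 = r then k else x_order r0"
  have r0': "r0 < length xpts" and s0': "s0 < length ypts"
    using r0(1) s0(1) by (simp_all add: length_xpts length_ypts)
  obtain gA dA' where gA: "dual_form a0 a1 xpts x_order dA r k = point_form a0 a1 (xpts ! r0) ^ ?eA * gA"
      "binary_form a0 a1 dA' gA"
    by (rule dual_form_factor[OF coords_neq(1) r0'])
  have "s0 \<noteq> s" using s0(1) q_le(2) by simp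
  obtain gB dB' where gB: "dual_form b0 b1 ypts (y_order r k) dB s b =
      point_form b0 b1 (ypts ! s0) ^ (if s0 = s then b else y_order r k s0) * gB" "binary_form b0 b1 dB' gB"
    by (rule dual_form_factor[OF coords_neq(2) s0'])
  have "inR gA" "inR gB"
    using binary_form_inR[OF coords_in_range(1,2) gA(2)] binary_form_inR[OF coords_in_range(3,4) gB(2)] .
  moreover have "basis_form q = (point_form a0 a1 (pnorm P) ^ ?eA * gA) *
      (point_form b0 b1 (pnorm Q) ^ y_order r k s0 * gB)"
    using r0 s0 \<open>s0 \<noteq> s\<close> by (simp add: q_eq basis_form_def gA(1) gB(1) xpts_nth ypts_nth)
  moreover have "m \<le> ?eA + y_order r k s0"
    using mult_at_le_orders[OF q[unfolded q_eq] r0(1) s0(1)] m by simp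
  ultimately show ?thesis
    using point_forms_mult_mem_ideal_pow[OF P0 Q0] by simp
qed

lemma basis_form_in_fat_ideal:
  assumes "q \<in> ideal_indices"
  shows "basis_form q \<in> fat_ideal Z"
proof -
  have "basis_form q \<in> bihom dA dB"
    using assms ideal_indices_subset basis_form_in_bihom by blast
  then have "inR (basis_form q)" by (simp add: bihom_def)
  then show ?thesis
    using basis_form_in_point_ideal_pow[OF assms] by (auto simp: fat_ideal_def)
qed

lemma hasse_functional_fat_ideal:
  assumes p: "p \<in> indices - ideal_indices" and f: "f \<in> fat_ideal Z"
  shows "hasse_functional p f = 0"
proof -
  obtain r k s b where p_eq: "p = ((r, k), (s, b))" by (cases p) auto
  have p_in: "r < length xpts" "k < x_order r" "s < length ypts" "b < y_order r k s"
    using p by (simp_all add: p_eq mem_indices)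
  moreover have "s \<noteq> length ys"
    using p p_in by (auto simp: p_eq mem_ideal_indices)
  ultimately have "s < length ys" "b < y_order r k s"
    by (simp_all add: length_ypts)
  then have "k + b < mult_at r s"
    using y_order_le[of s r k] by linarith
  then obtain P Q where PQ: "(P, Q, mult_at r s) \<in> set Z" "pnorm P = xpts ! r" "pnorm Q = ypts ! s"
    using mult_pos_imp_entry[of Z "xpts ! r" "ypts ! s"] mult_entry[OF fat]
    unfolding mult_at_def by (metis gr_zeroI less_nat_zero_code)
  have "P \<noteq> (0, 0)" "Q \<noteq> (0, 0)"
    using fat_point_scheme_entry[OF fat PQ(1)] by simp_all
  moreover have "f \<in> ideal_pow (point_ideal P Q) (mult_at r s)"
    using f PQ(1) by (auto simp: fat_ideal_def)
  ultimately have "vanishes_to (xpts ! r) (ypts ! s) (mult_at r s) f"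
    using vanishes_to_point_ideal_pow PQ(2,3) by metis
  then show ?thesis
    using \<open>k + b < mult_at r s\<close> by (simp add: vanishes_to_def hasse_functional_def p_eq)
qed

theorem codim_fat_ideal:
  "mpoly_vs.dim (bihom dA dB :: 'k mpoly set) - mpoly_vs.dim (fat_ideal Z \<inter> bihom dA dB) =
    (\<Sum>a\<in>#alpha Z. min a (dB + 1))"
proof -
  let ?B = "(\<lambda>(c, e). Poly_Mapping.single (bimonomial dA dB c e) (1::'k)) ` ({..dA} \<times> {..dB})"
  have B: "finite ?B" "card ?B \<le> card indices" "bihom dA dB \<subseteq> mpoly_vs.span ?B"
    using card_image_le[of "{..dA} \<times> {..dB}"] bihom_subset_span_bimonomials
    by (auto simp: card_indices card_cartesian_product)
  have lin: "hasse_functional p (f + g) = hasse_functional p f + hasse_functional p g" "hasse_functional p (scal c f) = c * hasse_functional p f"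
    for p f g c
    by (simp_all add: hasse_functional_def case_prod_beta hasse2_add hasse2_scal)
  have E: "basis_form ` indices \<subseteq> bihom dA dB" "basis_form ` ideal_indices \<subseteq> fat_ideal Z \<inter> bihom dA dB"
    using basis_form_in_bihom basis_form_in_fat_ideal ideal_indices_subset by blast+
  have "mpoly_vs.dim (bihom dA dB :: 'k mpoly set) = card indices"
    by (rule mpoly_vs.dim_eq_card_triangular[OF lin finite_indices triangular_indices E(1) B(1,3,2)])
  moreover have "mpoly_vs.dim (fat_ideal Z \<inter> bihom dA dB) = card ideal_indices"
    by (rule mpoly_vs.dim_subspace_eq_card_triangular[OF lin finite_indices triangular_indices E(1)
          B(1,3,2) ideal_indices_subset _ E(2) hasse_functional_fat_ideal]) auto
  ultimately show ?thesis
    using card_indices_diff_ideal_indices ideal_indices_subset finite_indices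
    by (simp add: card_Diff_subset finite_subset)
qed

end

lemma (in biprojective_coords) codim_fat_ideal_alpha:
  fixes Z :: "'k::alg_closed_field fatpts"
  assumes "fat_point_scheme Z" "size (alpha Z) \<le> dA + 1"
  shows "mpoly_vs.dim (bihom dA dB :: 'k mpoly set) - mpoly_vs.dim (fat_ideal Z \<inter> bihom dA dB) =
    (\<Sum>k=1..dB+1. size (filter_mset (\<lambda>a. a \<ge> k) (alpha Z)))"
proof -
  obtain xs where "distinct xs" "set xs = proj1 Z"
    using finite_distinct_list[OF finite_proj(1)] by metis
  moreover obtain ys where "distinct ys" "set ys = proj2 Z"
    using finite_distinct_list[OF finite_proj(2)] by metis
  moreover obtain x_new where "normal_point x_new" "x_new \<notin> proj1 Z"
    using exists_normal_point_notin[OF alg_closed_field_infinite finite_proj(1)] .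
  moreover obtain y_new where "normal_point y_new" "y_new \<notin> proj2 Z"
    using exists_normal_point_notin[OF alg_closed_field_infinite finite_proj(2)] .
  ultimately interpret fat_point_frame a0 a1 b0 b1 Z xs ys x_new y_new dA dB
    using assms by unfold_locales simp_all
  show ?thesis
    unfolding sum_filter_mset_ge by (rule codim_fat_ideal)
qed

section \<open>Exchanging the two factors\<close>

interpretation xy: biprojective_coords 0 1 2 3
  by unfold_locales auto

interpretation yx: biprojective_coords 2 3 0 1
  by unfold_locales auto

definition swap_scheme :: "'k fatpts \<Rightarrow> 'k fatpts" where
  "swap_scheme Z = map (\<lambda>(P, Q, m). (Q, P, m)) Z"

lemma fat_point_scheme_swap_scheme:
  assumes "fat_point_scheme Z"
  shows "fat_point_scheme (swap_scheme Z)"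
proof -
  have "map (\<lambda>(P, Q, m). (pnorm P, pnorm Q)) (swap_scheme Z) =
      map prod.swap (map (\<lambda>(P, Q, m). (pnorm P, pnorm Q)) Z)"
    by (auto simp: swap_scheme_def)
  moreover have "distinct (map prod.swap (map (\<lambda>(P, Q, m). (pnorm P, pnorm Q)) Z))"
  proof (rule distinct_map[THEN iffD2], rule conjI)
    show "distinct (map (\<lambda>(P, Q, m). (pnorm P, pnorm Q)) Z)"
      using assms by (simp add: fat_point_scheme_def)
    show "inj_on prod.swap (set (map (\<lambda>(P, Q, m). (pnorm P, pnorm Q)) Z))"
      by (metis inj_onI swap_swap)
  qed
  moreover have "\<forall>(P, Q, m)\<in>set (swap_scheme Z). P \<noteq> (0, 0) \<and> Q \<noteq> (0, 0) \<and> m > 0"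
    using assms unfolding fat_point_scheme_def swap_scheme_def by auto
  ultimately show ?thesis unfolding fat_point_scheme_def by simp
qed

lemma alpha_swap_scheme: "alpha (swap_scheme Z) = beta Z"
proof -
  have "proj1 (swap_scheme Z) = proj2 Z" "proj2 (swap_scheme Z) = proj1 Z"
    by (force simp: proj1_def proj2_def swap_scheme_def)+
  moreover have "mult (swap_scheme Z) Q R = mult Z R Q" for Q R
  proof -
    have "filter (\<lambda>(P', Q', m). pnorm P' = Q \<and> pnorm Q' = R) (swap_scheme Z) =
        map (\<lambda>(P, Q, m). (Q, P, m)) (filter (\<lambda>(P', Q', m). pnorm P' = R \<and> pnorm Q' = Q) Z)"
      by (simp add: swap_scheme_def filter_map comp_def case_prod_beta' conj_commute)
    then show ?thesis by (simp add: mult_def comp_def case_prod_beta')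
  qed
  ultimately show ?thesis by (simp add: alpha_def beta_def)
qed

lemma Rdeg_eq_xy_bihom: "Rdeg i j = xy.bihom i j"
  unfolding Rdeg_def xy.bihom_def bideg_def by auto

lemma Rdeg_eq_yx_bihom: "Rdeg i j = yx.bihom j i"
  unfolding Rdeg_def yx.bihom_def bideg_def by auto

lemma I_Z_eq_xy_fat_ideal: "I_Z Z = xy.fat_ideal Z"
  unfolding I_Z_def xy.fat_ideal_def xy.point_ideal_def pt_ideal_def point_form_def ..

lemma I_Z_eq_yx_fat_ideal: "I_Z Z = yx.fat_ideal (swap_scheme Z)"
  unfolding I_Z_def yx.fat_ideal_def yx.point_ideal_def pt_ideal_def point_form_def swap_scheme_def
  by (simp add: image_image case_prod_beta insert_commute)

theorem theorem3p2:
  fixes Z :: "'k::alg_closed_field fatpts"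
  assumes "fat_point_scheme Z"
  shows "(\<forall>i j. i + 1 \<ge> size (alpha Z) \<longrightarrow>
            HF Z i j = (\<Sum>k=1..j+1. size (filter_mset (\<lambda>a. a \<ge> k) (alpha Z))))
       \<and> (\<forall>i j. j + 1 \<ge> size (beta Z) \<longrightarrow>
            HF Z i j = (\<Sum>k=1..i+1. size (filter_mset (\<lambda>b. b \<ge> k) (beta Z))))"
proof (intro conjI allI impI)
  fix i j :: nat
  assume "size (alpha Z) \<le> i + 1"
  then show "HF Z i j = (\<Sum>k=1..j+1. size (filter_mset (\<lambda>a. a \<ge> k) (alpha Z)))"
    using xy.codim_fat_ideal_alpha[OF assms]
    by (simp add: HF_def Rdeg_eq_xy_bihom I_Z_eq_xy_fat_ideal)
next
  fix i j :: nat
  assume "size (beta Z) \<le> j + 1"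
  then show "HF Z i j = (\<Sum>k=1..i+1. size (filter_mset (\<lambda>b. b \<ge> k) (beta Z)))"
    using yx.codim_fat_ideal_alpha[OF fat_point_scheme_swap_scheme[OF assms]]
    by (simp add: HF_def Rdeg_eq_yx_bihom I_Z_eq_yx_fat_ideal alpha_swap_scheme)
qed

end
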